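(* Let $\gamma$ be the geodesic with $\gamma(0)=1$ and $\dot\gamma(0)=z_0+x_0$, $z_0\in\mathfrak z$, $x_0\in\mathfrak v$, and let $J=J_{z_0}$. (1) If $J=0$ and $x_0=0$, there are no points conjugate to $\gamma(0)$ along $\gamma$. (2) If $J=0$ and $x_0\neq0$, then for $t\neq0$, $\gamma(t)$ is conjugate to $\gamma(0)$ along $\gamma$ if and only if $-12/t^2$ is an eigenvalue of the linear operator $A:\mathfrak z\to\mathfrak z$, $A(z)=[x_0,J_zx_0]$; in that case $\mathrm{mult}_{cp}(t)=\dim\ker(A+\tfrac{12}{t^2}I)\le\dim\mathfrak z$. (3) If $J\neq0$ and $x_0=0$, let $-\lambda_1^2,\dots,-\lambda_q^2$ ($\lambda_k>0$, pairwise distinct) be the distinct negative real eigenvalues of $J^2$. Then $\gamma(t)$ is conjugate to $\gamma(0)$ along $\gamma$ if and only if $t\in\bigcup_{k=1}^q\frac{2\pi}{\lambda_k}\mathbb Z^*$, and for $t=\frac{2\pi}{\lambda_k}n$ ($n\in\mathbb Z^*$) $$\mathrm{mult}_{cp}\Big(\tfrac{2\pi}{\lambda_k}n\Big)=\sum_{h:\ \frac{\lambda_k}{n}\mid\lambda_h}\dim\ker(J^2+\lambda_h^2I)\le\dim\mathfrak v.$$ (In particular, if $J^2$ has no negative eigenvalues there are no conjugate points.)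
   Context: Let $N$ be a connected, simply connected, 2-step nilpotent real Lie group with Lie algebra $\mathfrak n$ and center $\mathfrak z$. Let $\langle\,,\rangle$ be an inner product on $\mathfrak n$, meaning a nondegenerate symmetric bilinear form (possibly indefinite); the same symbol denotes the induced left-invariant pseudo-Riemannian metric on $N$, with Levi-Civita connection $\nabla$. Assume the restriction of $\langle\,,\rangle$ to $\mathfrak z$ is nondegenerate and put $\mathfrak v=\mathfrak z^\perp$, so $\mathfrak n=\mathfrak z\oplus\mathfrak v$ orthogonally. For $z\in\mathfrak z$ define $J_z:\mathfrak v\to\mathfrak v$ by $\langle J_zx,y\rangle=\langle z,[x,y]\rangle$ for all $y\in\mathfrak v$; $J_z$ is skew-adjoint. All tangent spaces of $N$ are identified with $\mathfrak n=T_1N$ via left translation; with this identification the geodesic $\gamma$ with $\gamma(0)=1$, $\dot\gamma(0)=z_0+x_0$ satisfies $\dot\gamma(t)=z_0+e^{tJ_{z_0}}x_0$. A Jacobi field along $\gamma$ is a vector field $Y$ along $\gamma$ with $\nabla_{\dot\gamma}\nabla_{\dot\gamma}Y+R(Y,\dot\gamma)\dot\gamma=0$, where $R(X,Y)=\nabla_X\nabla_Y-\nabla_Y\nabla_X-\nabla_{[X,Y]}$. For $t_0\neq0$, $\gamma(t_0)$ is conjugate to $\gamma(0)$ along $\gamma$ if there is a nontrivial Jacobi field $Y$ along $\gamma$ with $Y(0)=Y(t_0)=0$; its multiplicity $\mathrm{mult}_{cp}(t_0)$ is the dimension of the space of Jacobi fields vanishing at $0$ and $t_0$. $\mathbb Z^*=\mathbb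 Z\setminus\{0\}$; for real $a,b$, $a\mid b$ means $b$ is a nonzero integer multiple of $a$. *)

theory Defs
  imports "HOL-Analysis.Analysis" "HOL-Library.Function_Algebras"
begin

definition lie_bracket :: "('n::real_vector \<Rightarrow> 'n \<Rightarrow> 'n) \<Rightarrow> bool" where
  "lie_bracket br \<longleftrightarrow> bilinear br \<and> (\<forall>x. br x x = 0) \<and>
     (\<forall>x y w. br x (br y w) + br y (br w x) + br w (br x y) = 0)"

definition two_step_nilpotent :: "('n::real_vector \<Rightarrow> 'n \<Rightarrow> 'n) \<Rightarrow> bool" where
  "two_step_nilpotent br \<longleftrightarrow> lie_bracket br \<and> (\<forall>x y w. br (br x y) w = 0) \<and> (\<exists>x y. br x y \<noteq> 0)"

definition lie_center :: "('n::real_vector \<Rightarrow> 'n \<Rightarrow> 'n) \<Rightarrow> 'n set" where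
  "lie_center br = {z. \<forall>x. br z x = 0}"

text \<open>Inner product = nondegenerate symmetric bilinear form (possibly indefinite).\<close>
definition inner_prod :: "('n::real_vector \<Rightarrow> 'n \<Rightarrow> real) \<Rightarrow> bool" where
  "inner_prod g \<longleftrightarrow> bilinear g \<and> (\<forall>x y. g x y = g y x) \<and> (\<forall>x. (\<forall>y. g x y = 0) \<longrightarrow> x = 0)"

definition nondeg_on :: "('n::real_vector \<Rightarrow> 'n \<Rightarrow> real) \<Rightarrow> 'n set \<Rightarrow> bool" where
  "nondeg_on g S \<longleftrightarrow> (\<forall>x\<in>S. (\<forall>y\<in>S. g x y = 0) \<longrightarrow> x = 0)"

definition orth_compl :: "('n::real_vector \<Rightarrow> 'n \<Rightarrow> real) \<Rightarrow> 'n set \<Rightarrow> 'n set" where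
  "orth_compl g S = {x. \<forall>y\<in>S. g x y = 0}"

definition vpart :: "('n::real_vector \<Rightarrow> 'n \<Rightarrow> real) \<Rightarrow> ('n \<Rightarrow> 'n \<Rightarrow> 'n) \<Rightarrow> 'n set" where
  "vpart g br = orth_compl g (lie_center br)"

definition Jmap :: "('n::real_vector \<Rightarrow> 'n \<Rightarrow> real) \<Rightarrow> ('n \<Rightarrow> 'n \<Rightarrow> 'n) \<Rightarrow> 'n \<Rightarrow> 'n \<Rightarrow> 'n" where
  "Jmap g br z x = (THE w. w \<in> vpart g br \<and> (\<forall>y\<in>vpart g br. g w y = g z (br x y)))"

text \<open>Levi-Civita connection on left-invariant fields (Koszul formula).\<close>
definition lc_conn :: "('n::real_vector \<Rightarrow> 'n \<Rightarrow> real) \<Rightarrow> ('n \<Rightarrow> 'n \<Rightarrow> 'n) \<Rightarrow> 'n \<Rightarrow> 'n \<Rightarrow> 'n" where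
  "lc_conn g br x y = (THE u. \<forall>w. 2 * g u w = g (br x y) w - g (br y w) x + g (br w x) y)"

definition curv :: "('n::real_vector \<Rightarrow> 'n \<Rightarrow> real) \<Rightarrow> ('n \<Rightarrow> 'n \<Rightarrow> 'n) \<Rightarrow> 'n \<Rightarrow> 'n \<Rightarrow> 'n \<Rightarrow> 'n" where
  "curv g br x y w = lc_conn g br x (lc_conn g br y w) - lc_conn g br y (lc_conn g br x w)
      - lc_conn g br (br x y) w"

text \<open>c is the left-trivialized velocity of a geodesic:
  nabla_{dot gamma} dot gamma = c' + nabla_c c = 0.\<close>
definition geodesic_velocity ::
  "('n::real_normed_vector \<Rightarrow> 'n \<Rightarrow> real) \<Rightarrow> ('n \<Rightarrow> 'n \<Rightarrow> 'n) \<Rightarrow> (real \<Rightarrow> 'n) \<Rightarrow> bool" where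
  "geodesic_velocity g br c \<longleftrightarrow>
     (\<forall>t. (c has_vector_derivative (- lc_conn g br (c t) (c t))) (at t))"

text \<open>Jacobi field along the geodesic with left-trivialized velocity c, written in the
  left-invariant frame: covariant derivative along gamma is D Y = Y' + nabla_c Y.\<close>
definition jacobi_field ::
  "('n::real_normed_vector \<Rightarrow> 'n \<Rightarrow> real) \<Rightarrow> ('n \<Rightarrow> 'n \<Rightarrow> 'n) \<Rightarrow> (real \<Rightarrow> 'n) \<Rightarrow> (real \<Rightarrow> 'n) \<Rightarrow> bool" where
  "jacobi_field g br c Y \<longleftrightarrow> (\<exists>Y1 W1. \<forall>t.
     (Y has_vector_derivative Y1 t) (at t) \<and>
     ((\<lambda>s. Y1 s + lc_conn g br (c s) (Y s)) has_vector_derivative W1 t) (at t) \<and>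
     W1 t + lc_conn g br (c t) (Y1 t + lc_conn g br (c t) (Y t))
       + curv g br (Y t) (c t) (c t) = 0)"

definition conjugate_at ::
  "('n::real_normed_vector \<Rightarrow> 'n \<Rightarrow> real) \<Rightarrow> ('n \<Rightarrow> 'n \<Rightarrow> 'n) \<Rightarrow> (real \<Rightarrow> 'n) \<Rightarrow> real \<Rightarrow> bool" where
  "conjugate_at g br c t0 \<longleftrightarrow> t0 \<noteq> 0 \<and>
     (\<exists>Y. jacobi_field g br c Y \<and> Y 0 = 0 \<and> Y t0 = 0 \<and> Y \<noteq> (\<lambda>_. 0))"

definition mult_cp ::
  "('n::real_normed_vector \<Rightarrow> 'n \<Rightarrow> real) \<Rightarrow> ('n \<Rightarrow> 'n \<Rightarrow> 'n) \<Rightarrow> (real \<Rightarrow> 'n) \<Rightarrow> real \<Rightarrow> nat" where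
  "mult_cp g br c t0 = vector_space.dim (\<lambda>(r::real) (f::real \<Rightarrow> 'n). (\<lambda>t. r *\<^sub>R f t))
     {Y. jacobi_field g br c Y \<and> Y 0 = 0 \<and> Y t0 = 0}"

end

theory Submission
  imports Defs
begin

text \<open>
  Whenever \<open>J\<^bsub>z0\<^esub> x0 = 0\<close> the velocity of the geodesic is constant: the geodesic equation
  \<open>c' = J\<^bsub>c\<^esub> c\<close> conserves the central part of \<open>c\<close>, and \<open>z0 + x0\<close> is a stationary point of
  \<open>c' = J\<^bsub>z0\<^esub> c\<close>. The Jacobi equation then has constant coefficients.

  If \<open>J\<^bsub>z0\<^esub> = 0\<close>, write \<open>K y = J\<^bsub>y\<^esub> x0\<close> and \<open>A = [x0, K -]\<close>. Since \<open>K\<close> and \<open>[x0, -]\<close> square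
  to zero, the Jacobi field with \<open>Y(0) = 0\<close>, \<open>Y'(0) = a\<close> is the cubic
  \<open>t a + t\<^sup>2/2 (K a - [x0, a]) - t\<^sup>3/6 A a\<close>, and \<open>Y(t0) = 0\<close> holds exactly when
  \<open>a + t0/2 K a\<close> is an eigenvector of \<open>A\<close> for \<open>-12/t0\<^sup>2\<close>; this correspondence is linear and bijective.

  If \<open>x0 = 0\<close>, the Jacobi equation is \<open>Y'' = J\<^bsub>z0\<^esub> Y'\<close>, and \<open>Y(0) = Y(t0) = 0\<close> makes \<open>Y'\<close> a
  \<open>|t0|\<close>-periodic solution of \<open>u' = J\<^bsub>z0\<^esub> u\<close>. Averaging the Euclidean inner product along a
  periodic solution of a linear equation \<open>u' = L u\<close> gives a positive definite form for which \<open>L\<close>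
  is skew on the span of the orbit; hence the orbit lies in the span of the kernel of \<open>L\<close> and of
  the eigenvectors of \<open>L\<^sup>2\<close> for \<open>-\<mu>\<^sup>2\<close> with \<open>\<mu> T \<in> 2\<pi>\<int>\<close>. The kernel component of \<open>Y'(0)\<close> would
  make \<open>Y(t0) \<noteq> 0\<close>, so \<open>Y'(0)\<close> ranges exactly over the sum of the eigenspaces of \<open>J\<^bsub>z0\<^esub>\<^sup>2\<close>
  for the eigenvalues \<open>-\<lambda>\<^sup>2\<close> with \<open>\<lambda> t0 \<in> 2\<pi>\<int>\<close>, and the eigenspaces for distinct eigenvalues
  are independent.
\<close>

section \<open>Linear algebra\<close>

lemma nondegenerate_bilinear_representation:
  fixes G :: "'a::euclidean_space \<Rightarrow> 'a \<Rightarrow> real"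
  assumes G: "bilinear G" and S: "subspace S"
    and nondeg: "\<And>x. x \<in> S \<Longrightarrow> (\<forall>y\<in>S. G x y = 0) \<Longrightarrow> x = 0"
    and l: "linear l"
  shows "\<exists>w\<in>S. \<forall>y\<in>S. G w y = l y"
proof -
  obtain B where B: "B \<subseteq> S" "independent B" "span B = S"
    using S basis_exists span_subspace by metis
  have fin: "finite B" using B(2) finiteI_independent by blast
  have coeffs_zero: "\<forall>b\<in>B. k b = 0" if "(\<Sum>b\<in>B. k b *\<^sub>R b) = 0" for k
    using B(2) dependent_finite[OF fin] that by blast
  have vanish: "\<forall>y\<in>S. h y = 0" if "linear h" "\<forall>b\<in>B. h b = 0" for h :: "'a \<Rightarrow> real"
    using linear_eq_on_span[OF that(1) linear_zero, of B] that(2) B(3) by auto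
  define \<Phi> where "\<Phi> x = (\<Sum>b\<in>B. G x b *\<^sub>R b)" for x
  have lin\<Phi>: "linear \<Phi>"
    unfolding \<Phi>_def by (rule linearI)
      (simp_all add: bilinear_ladd[OF G] bilinear_lmul[OF G] scaleR_add_left sum.distrib
        scaleR_sum_right)
  have \<Phi>S: "\<Phi> ` S \<subseteq> S"
    unfolding \<Phi>_def using B(1) S by (auto intro!: subspace_sum subspace_scale)
  have "inj_on \<Phi> S"
  proof (rule linear_inj_on_iff_eq_0[OF lin\<Phi> S, THEN iffD2], intro ballI impI)
    fix x assume x: "x \<in> S" "\<Phi> x = 0"
    then have "\<forall>b\<in>B. G x b = 0" using coeffs_zero[of "G x"] unfolding \<Phi>_def by blast
    then show "x = 0"
      using vanish[of "G x"] nondeg[OF x(1)] G by (simp add: bilinear_def)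
  qed
  then have "dim (\<Phi> ` S) = dim S"
    using dim_image_eq[OF lin\<Phi>, of S] S by (metis span_eq_iff)
  then have \<Phi>_onto: "\<Phi> ` S = S"
    by (intro subspace_dim_equal[OF linear_subspace_image[OF lin\<Phi> S] S \<Phi>S]) simp
  have "(\<Sum>b\<in>B. l b *\<^sub>R b) \<in> S" using B(1) S by (auto intro!: subspace_sum subspace_scale)
  then obtain w where w: "w \<in> S" "\<Phi> w = (\<Sum>b\<in>B. l b *\<^sub>R b)" using \<Phi>_onto by (metis imageE)
  then have "(\<Sum>b\<in>B. (G w b - l b) *\<^sub>R b) = 0"
    unfolding \<Phi>_def by (simp add: scaleR_diff_left sum_subtractf)
  then have "\<forall>b\<in>B. G w b - l b = 0" by (rule coeffs_zero)
  moreover have "linear (\<lambda>y. G w y - l y)"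
    using G l by (intro linear_compose_sub) (simp_all add: bilinear_def)
  ultimately have "\<forall>y\<in>S. G w y - l y = 0" by (intro vanish)
  then show ?thesis using w(1) by auto
qed

lemma linear_coeff_zero_if_quadratic_nonpos:
  fixes b c :: real
  assumes "\<And>\<epsilon>. b * \<epsilon> + c * \<epsilon>\<^sup>2 \<le> 0"
  shows "b = 0"
proof (rule ccontr)
  assume b: "b \<noteq> 0"
  define d where "d = \<bar>c\<bar> + 1"
  have d: "d > 0" "d + c \<ge> 1" unfolding d_def by auto
  have "b * (b / d) + c * (b / d)\<^sup>2 = (b / d)\<^sup>2 * (d + c)"
    using d by (simp add: field_simps power2_eq_square)
  moreover have "(b / d)\<^sup>2 * (d + c) > 0" using b d by (intro mult_pos_pos) auto
  ultimately show False using assms[of "b / d"] by simp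
qed

lemma rayleigh_quotient_attains_max:
  fixes B :: "'a::euclidean_space \<Rightarrow> 'a \<Rightarrow> real" and S :: "'a \<Rightarrow> 'a"
  assumes B: "bilinear B" and B_pos: "\<And>x. x \<noteq> 0 \<Longrightarrow> B x x > 0"
    and R: "subspace R" and r: "r \<in> R" "r \<noteq> 0" and S: "linear S"
  obtains y0 M where "y0 \<in> R" "y0 \<noteq> 0" "B (S y0) y0 = M * B y0 y0"
    and "\<And>y. y \<in> R \<Longrightarrow> B (S y) y \<le> M * B y y"
proof -
  define K where "K = R \<inter> sphere 0 1"
  have cK: "compact K" unfolding K_def
    by (intro closed_Int_compact closed_subspace[OF R] compact_sphere)
  have "(1 / norm r) *\<^sub>R r \<in> K" using r R unfolding K_def by (auto simp: subspace_scale)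
  then have neK: "K \<noteq> {}" by auto
  define q where "q y = B (S y) y / B y y" for y
  have bb: "bounded_bilinear B" using B bilinear_conv_bounded_bilinear by blast
  have contS: "continuous_on UNIV S"
    using S linear_continuous_on linear_conv_bounded_linear by blast
  have Knz: "y \<in> K \<Longrightarrow> B y y \<noteq> 0" for y
  proof
    assume "y \<in> K" "B y y = 0"
    then have "y \<noteq> 0" unfolding K_def by auto
    then show False using B_pos[of y] \<open>B y y = 0\<close> by simp
  qed
  have cq: "continuous_on K q" unfolding q_def
    by (intro continuous_on_divide bounded_bilinear.continuous_on[OF bb]
        continuous_on_compose2[OF contS] continuous_on_id) (use Knz in auto)
  obtain y0 where y0: "y0 \<in> K" "\<And>y. y \<in> K \<Longrightarrow> q y \<le> q y0"
    using continuous_attains_sup[OF cK neK cq] by blast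
  have y0R: "y0 \<in> R" and y0nz: "y0 \<noteq> 0" using y0(1) unfolding K_def by auto
  have hom1: "B (S (c *\<^sub>R y)) (c *\<^sub>R y) = c^2 * B (S y) y" for c y
    by (simp add: bilinear_lmul[OF B] bilinear_rmul[OF B] linear_scale[OF S] power2_eq_square)
  have hom2: "B (c *\<^sub>R y) (c *\<^sub>R y) = c^2 * B y y" for c y
    by (simp add: bilinear_lmul[OF B] bilinear_rmul[OF B] power2_eq_square)
  have "B (S y) y \<le> q y0 * B y y" if y: "y \<in> R" for y
  proof (cases "y = 0")
    case True then show ?thesis
      by (simp add: bilinear_lzero[OF B] bilinear_rzero[OF B] linear_0[OF S])
  next
    case False
    let ?y = "(1/norm y) *\<^sub>R y"
    have "?y \<in> K" using y False R unfolding K_def by (auto simp: subspace_scale)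
    then have "q ?y \<le> q y0" using y0 by auto
    moreover have "q ?y = q y" unfolding q_def hom1 hom2 using False by simp
    ultimately have "B (S y) y / B y y \<le> q y0" unfolding q_def by simp
    then show ?thesis using B_pos[OF False] by (simp add: pos_divide_le_eq)
  qed
  moreover have "B (S y0) y0 = q y0 * B y0 y0" unfolding q_def using B_pos[OF y0nz] by simp
  ultimately show thesis using that y0R y0nz by blast
qed

text \<open>The first variation of the Rayleigh quotient at a maximiser shows that it is an eigenvector.\<close>
lemma selfadjoint_has_eigenvector:
  fixes B :: "'a::euclidean_space \<Rightarrow> 'a \<Rightarrow> real" and S :: "'a \<Rightarrow> 'a"
  assumes B: "bilinear B" and B_sym: "\<And>x y. B x y = B y x" and B_pos: "\<And>x. x \<noteq> 0 \<Longrightarrow> B x x > 0"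
    and R: "subspace R" and r: "r \<in> R" "r \<noteq> 0" and S: "linear S"
    and S_R: "\<And>y. y \<in> R \<Longrightarrow> S y \<in> R"
    and S_sym: "\<And>y y'. y \<in> R \<Longrightarrow> y' \<in> R \<Longrightarrow> B (S y) y' = B y (S y')"
  shows "\<exists>y\<in>R. y \<noteq> 0 \<and> (\<exists>M. S y = M *\<^sub>R y)"
proof -
  obtain y0 M where y0R: "y0 \<in> R" and y0nz: "y0 \<noteq> 0" and eqM: "B (S y0) y0 = M * B y0 y0"
    and le: "\<And>y. y \<in> R \<Longrightarrow> B (S y) y \<le> M * B y y"
    using rayleigh_quotient_attains_max[OF B B_pos R r S] by blast
  have orth: "B (S y0 - M *\<^sub>R y0) v = 0" if v: "v \<in> R" for v
  proof -
    define b where "b = 2 * (B (S y0) v - M * B y0 v)"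
    define c where "c = B (S v) v - M * B v v"
    have "b*\<epsilon> + c*\<epsilon>^2 \<le> 0" for \<epsilon>
    proof -
      have "y0 + \<epsilon> *\<^sub>R v \<in> R" using y0R v R by (simp add: subspace_add subspace_scale)
      then have 1: "B (S (y0 + \<epsilon> *\<^sub>R v)) (y0 + \<epsilon> *\<^sub>R v) \<le> M * B (y0 + \<epsilon> *\<^sub>R v) (y0 + \<epsilon> *\<^sub>R v)"
        by (rule le)
      have 2: "B (S (y0 + \<epsilon> *\<^sub>R v)) (y0 + \<epsilon> *\<^sub>R v)
          = B (S y0) y0 + \<epsilon> * (B (S y0) v + B (S v) y0) + \<epsilon>^2 * B (S v) v"
        by (simp add: linear_add[OF S] linear_scale[OF S] bilinear_ladd[OF B] bilinear_radd[OF B]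
            bilinear_lmul[OF B] bilinear_rmul[OF B] algebra_simps power2_eq_square)
      have 3: "B (S v) y0 = B (S y0) v" using S_sym[OF v y0R] B_sym by metis
      have 4: "B (y0 + \<epsilon> *\<^sub>R v) (y0 + \<epsilon> *\<^sub>R v) = B y0 y0 + 2 * \<epsilon> * B y0 v + \<epsilon>^2 * B v v"
        using B_sym[of v y0]
        by (simp add: bilinear_ladd[OF B] bilinear_radd[OF B]
            bilinear_lmul[OF B] bilinear_rmul[OF B] algebra_simps power2_eq_square)
      show ?thesis using 1 unfolding 2 3 4 b_def c_def using eqM by (simp add: algebra_simps)
    qed
    then have "b = 0" by (rule linear_coeff_zero_if_quadratic_nonpos)
    then show ?thesis unfolding b_def by (simp add: bilinear_lsub[OF B] bilinear_lmul[OF B])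
  qed
  have "S y0 - M *\<^sub>R y0 \<in> R" using S_R[OF y0R] y0R R by (simp add: subspace_diff subspace_scale)
  then have "B (S y0 - M *\<^sub>R y0) (S y0 - M *\<^sub>R y0) = 0" by (rule orth)
  then have "S y0 - M *\<^sub>R y0 = 0" using B_pos[of "S y0 - M *\<^sub>R y0"] by (cases "S y0 - M *\<^sub>R y0 = 0") auto
  then show ?thesis using y0R y0nz by auto
qed

lemma subspace_eigenspace: "linear T \<Longrightarrow> subspace {x. T x = (l::real) *\<^sub>R x}"
  unfolding subspace_def by (auto simp: linear_add linear_scale linear_0 algebra_simps)

lemma eigenvector_notin_span_other_eigenspaces:
  fixes T :: "'a::euclidean_space \<Rightarrow> 'a"
  assumes lin: "linear T" and fin: "finite K"
  shows "k \<notin> K \<Longrightarrow> x \<in> span (\<Union>l\<in>K. {x. T x = l *\<^sub>R x}) \<Longrightarrow> T x = k *\<^sub>R x \<Longrightarrow> x = 0"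
  using fin
proof (induction K arbitrary: x)
  case empty
  then show ?case by simp
next
  case (insert j K)
  have "x \<in> span ({x. T x = j *\<^sub>R x} \<union> (\<Union>l\<in>K. {x. T x = l *\<^sub>R x}))"
    using insert.prems(2) by (simp add: Un_commute)
  then obtain a b where ab: "x = a + b" "a \<in> span {x. T x = j *\<^sub>R x}"
      "b \<in> span (\<Union>l\<in>K. {x. T x = l *\<^sub>R x})"
    unfolding span_Un by blast
  have spE: "span {x. T x = j *\<^sub>R x} = {x. T x = j *\<^sub>R x}" by (rule span_eq_iff[THEN iffD2, OF subspace_eigenspace[OF lin]])
  have a: "T a = j *\<^sub>R a" using ab(2) spE by (simp del: span_eq_iff)
  define M where "M y = T y - j *\<^sub>R y" for y
  have linM: "linear M" unfolding M_def by (intro linear_compose_sub lin linear_compose_scale_right linear_ident)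
  have "M b \<in> M ` span (\<Union>l\<in>K. {x. T x = l *\<^sub>R x})" using ab(3) by blast
  also have "\<dots> = span (M ` (\<Union>l\<in>K. {x. T x = l *\<^sub>R x}))" using linear_span_image[OF linM] by simp
  also have "\<dots> \<subseteq> span (\<Union>l\<in>K. {x. T x = l *\<^sub>R x})"
  proof (rule span_mono, rule image_subsetI)
    fix y assume "y \<in> (\<Union>l\<in>K. {x. T x = l *\<^sub>R x})"
    then obtain l where l: "l \<in> K" "T y = l *\<^sub>R y" by blast
    have "T (M y) = l *\<^sub>R M y" unfolding M_def using l(2)
      by (simp add: linear_diff[OF lin] linear_scale[OF lin] algebra_simps)
    then show "M y \<in> (\<Union>l\<in>K. {x. T x = l *\<^sub>R x})" using l(1) by blast
  qed
  finally have Mb: "M b \<in> span (\<Union>l\<in>K. {x. T x = l *\<^sub>R x})" .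
  have Ma: "M a = 0" unfolding M_def using a by simp
  have "M x = (k - j) *\<^sub>R x" unfolding M_def using insert.prems(3) by (simp add: algebra_simps)
  moreover have "M x = M b" using ab(1) Ma linear_add[OF linM] by simp
  ultimately have Mbx: "M b = (k - j) *\<^sub>R x" by simp
  have "T (M b) = k *\<^sub>R M b" unfolding Mbx using insert.prems(3)
    by (simp add: linear_scale[OF lin])
  then have "M b = 0" using insert.IH[OF _ Mb] insert.prems(1) by simp
  then have "(k - j) *\<^sub>R x = 0" using Mbx by simp
  moreover have "k \<noteq> j" using insert.prems(1) by simp
  ultimately show ?case by simp
qed

lemma dim_span_eigenspaces:
  fixes T :: "'a::euclidean_space \<Rightarrow> 'a"
  assumes lin: "linear T" and fin: "finite K"
  shows "dim (span (\<Union>l\<in>K. {x. T x = l *\<^sub>R x})) = (\<Sum>l\<in>K. dim {x. T x = l *\<^sub>R x})"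
  using fin
proof (induction K)
  case empty
  then show ?case by simp
next
  case (insert k K)
  let ?E = "{x. T x = k *\<^sub>R x}" and ?S = "span (\<Union>l\<in>K. {x. T x = l *\<^sub>R x})"
  have sE: "subspace ?E" by (rule subspace_eigenspace[OF lin])
  have "span (\<Union>l\<in>insert k K. {x. T x = l *\<^sub>R x}) = span (?E \<union> (\<Union>l\<in>K. {x. T x = l *\<^sub>R x}))"
    by simp
  also have "\<dots> = {a + b |a b. a \<in> ?E \<and> b \<in> ?S}" unfolding span_Un span_eq_iff[THEN iffD2, OF sE] ..
  finally have eq: "span (\<Union>l\<in>insert k K. {x. T x = l *\<^sub>R x}) = {a + b |a b. a \<in> ?E \<and> b \<in> ?S}" .
  have int: "?E \<inter> ?S = {0}"
  proof
    show "?E \<inter> ?S \<subseteq> {0}" using eigenvector_notin_span_other_eigenspaces[OF lin insert.hyps(1) insert.hyps(2)] by blast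
    show "{0} \<subseteq> ?E \<inter> ?S" using span_zero by (auto simp: linear_0[OF lin])
  qed
  have "dim {a + b |a b. a \<in> ?E \<and> b \<in> ?S} + dim (?E \<inter> ?S) = dim ?E + dim ?S"
    by (rule dim_sums_Int[OF sE subspace_span])
  then have "dim (span (\<Union>l\<in>insert k K. {x. T x = l *\<^sub>R x})) = dim ?E + dim ?S"
    unfolding eq int by simp
  then show ?case using insert by simp
qed

text \<open>Curves \<open>\<real> \<Rightarrow> 'a\<close> with pointwise operations; \<open>real_fun.dim\<close> is the dimension in \<open>mult_cp\<close>.\<close>
interpretation real_fun: vector_space "(\<lambda>r f t. r *\<^sub>R f t) :: real \<Rightarrow> (real \<Rightarrow> 'a::real_vector) \<Rightarrow> real \<Rightarrow> 'a"
  by unfold_locales (auto simp: fun_eq_iff algebra_simps)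

interpretation real_fun_pair: finite_dimensional_vector_space_pair_1
  "scaleR :: real \<Rightarrow> 'b::euclidean_space \<Rightarrow> 'b" Basis
  "(\<lambda>r f t. r *\<^sub>R f t) :: real \<Rightarrow> (real \<Rightarrow> 'a::real_vector) \<Rightarrow> real \<Rightarrow> 'a"
  rewrites "module.dependent (*\<^sub>R) = dependent"
    and "module.span (*\<^sub>R) = span"
    and "module.subspace (*\<^sub>R) = subspace"
    and "vector_space.dim (*\<^sub>R) = dim"
  by unfold_locales (auto simp add: dependent_raw_def span_raw_def subspace_raw_def dim_raw_def)

lemma real_fun_linear_section:
  fixes F :: "(real \<Rightarrow> 'a::real_vector) set" and W :: "'b::euclidean_space set"
    and D :: "(real \<Rightarrow> 'a) \<Rightarrow> 'b"
  assumes W: "subspace W" "W \<subseteq> D ` F"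
    and F_0: "(\<lambda>t. 0) \<in> F"
    and F_add: "\<And>Y Z. Y \<in> F \<Longrightarrow> Z \<in> F \<Longrightarrow> (\<lambda>t. Y t + Z t) \<in> F"
    and F_scale: "\<And>Y c. Y \<in> F \<Longrightarrow> (\<lambda>t. c *\<^sub>R Y t) \<in> F"
    and D_add: "\<And>Y Z. Y \<in> F \<Longrightarrow> Z \<in> F \<Longrightarrow> D (\<lambda>t. Y t + Z t) = D Y + D Z"
    and D_scale: "\<And>Y c. Y \<in> F \<Longrightarrow> D (\<lambda>t. c *\<^sub>R Y t) = c *\<^sub>R D Y"
  obtains \<psi> where "Vector_Spaces.linear scaleR (\<lambda>r f t. r *\<^sub>R f t) \<psi>"
    and "\<And>w. w \<in> W \<Longrightarrow> \<psi> w \<in> F \<and> D (\<psi> w) = w"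
proof -
  obtain Bs where Bs: "Bs \<subseteq> W" "independent Bs" "span Bs = W"
    using W(1) basis_exists span_subspace by metis
  define \<psi>0 where "\<psi>0 b = (SOME Y. Y \<in> F \<and> D Y = b)" for b
  have \<psi>0: "\<psi>0 b \<in> F \<and> D (\<psi>0 b) = b" if b: "b \<in> W" for b
  proof -
    obtain Y where "Y \<in> F" "D Y = b" using W(2) b by blast
    then show ?thesis unfolding \<psi>0_def by (intro someI[of "\<lambda>Y. Y \<in> F \<and> D Y = b"]) simp
  qed
  define \<psi> where "\<psi> = real_fun_pair.construct Bs \<psi>0"
  have lin: "Vector_Spaces.linear scaleR (\<lambda>r f t. r *\<^sub>R f t) \<psi>"
    unfolding \<psi>_def by (rule real_fun_pair.linear_construct[OF Bs(2)])
  interpret lin: Vector_Spaces.linear scaleR "(\<lambda>r f t. r *\<^sub>R f t) :: real \<Rightarrow> (real \<Rightarrow> 'a) \<Rightarrow> real \<Rightarrow> 'a" \<psi>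
    by (rule lin)
  have "subspace {x. \<psi> x \<in> F \<and> D (\<psi> x) = x}" unfolding subspace_def
  proof (intro conjI ballI allI)
    have "\<psi> 0 = (\<lambda>t. 0)" using lin.zero by (simp add: zero_fun_def)
    moreover have "D (\<lambda>t. 0) = 0" using D_scale[OF F_0, of 0] by simp
    ultimately show "0 \<in> {x. \<psi> x \<in> F \<and> D (\<psi> x) = x}" using F_0 by auto
  next
    fix x y assume "x \<in> {x. \<psi> x \<in> F \<and> D (\<psi> x) = x}" "y \<in> {x. \<psi> x \<in> F \<and> D (\<psi> x) = x}"
    moreover have "\<psi> (x + y) = (\<lambda>t. \<psi> x t + \<psi> y t)" using lin.add by (simp add: plus_fun_def)
    ultimately show "x + y \<in> {x. \<psi> x \<in> F \<and> D (\<psi> x) = x}" using F_add D_add by auto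
  next
    fix c x assume "x \<in> {x. \<psi> x \<in> F \<and> D (\<psi> x) = x}"
    moreover have "\<psi> (c *\<^sub>R x) = (\<lambda>t. c *\<^sub>R \<psi> x t)" using lin.scale by simp
    ultimately show "c *\<^sub>R x \<in> {x. \<psi> x \<in> F \<and> D (\<psi> x) = x}" using F_scale D_scale by auto
  qed
  moreover have "\<psi> b \<in> F \<and> D (\<psi> b) = b" if "b \<in> Bs" for b
    using real_fun_pair.construct_basis[OF Bs(2) that, of \<psi>0] \<psi>0 Bs(1) that unfolding \<psi>_def by auto
  ultimately have "\<psi> w \<in> F \<and> D (\<psi> w) = w" if "w \<in> W" for w
    using span_induct[of w Bs "\<lambda>x. \<psi> x \<in> F \<and> D (\<psi> x) = x"] Bs(3) that by blast
  with lin that show thesis by blast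
qed

lemma real_fun_dim_eq_dim:
  fixes F :: "(real \<Rightarrow> 'a::real_vector) set" and W :: "'b::euclidean_space set"
    and D :: "(real \<Rightarrow> 'a) \<Rightarrow> 'b"
  assumes W: "subspace W" and img: "D ` F = W" and inj: "inj_on D F"
    and F_0: "(\<lambda>t. 0) \<in> F"
    and F_add: "\<And>Y Z. Y \<in> F \<Longrightarrow> Z \<in> F \<Longrightarrow> (\<lambda>t. Y t + Z t) \<in> F"
    and F_scale: "\<And>Y c. Y \<in> F \<Longrightarrow> (\<lambda>t. c *\<^sub>R Y t) \<in> F"
    and D_add: "\<And>Y Z. Y \<in> F \<Longrightarrow> Z \<in> F \<Longrightarrow> D (\<lambda>t. Y t + Z t) = D Y + D Z"
    and D_scale: "\<And>Y c. Y \<in> F \<Longrightarrow> D (\<lambda>t. c *\<^sub>R Y t) = c *\<^sub>R D Y"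
  shows "real_fun.dim F = dim W"
proof -
  obtain \<psi> where lin: "Vector_Spaces.linear scaleR (\<lambda>r f t. r *\<^sub>R f t) \<psi>"
    and \<psi>: "\<And>w. w \<in> W \<Longrightarrow> \<psi> w \<in> F \<and> D (\<psi> w) = w"
    using real_fun_linear_section[OF W] img F_0 F_add F_scale D_add D_scale by blast
  have "\<psi> ` W = F"
  proof
    show "F \<subseteq> \<psi> ` W"
    proof
      fix Y assume Y: "Y \<in> F"
      then have DY: "D Y \<in> W" using img by blast
      then have "\<psi> (D Y) = Y" using inj_onD[OF inj, of "\<psi> (D Y)" Y] \<psi>[OF DY] Y by simp
      then show "Y \<in> \<psi> ` W" using DY by force
    qed
  qed (use \<psi> in auto)
  moreover have "inj_on \<psi> (span W)"
  proof (rule inj_onI)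
    fix x y assume "x \<in> span W" "y \<in> span W" "\<psi> x = \<psi> y"
    then show "x = y" using \<psi> W by (metis span_eq_iff)
  qed
  ultimately show ?thesis using real_fun_pair.dim_image_eq[OF lin, of W] by simp
qed

section \<open>Linear differential equations\<close>

definition solves_linear_ode :: "('a::real_normed_vector \<Rightarrow> 'a) \<Rightarrow> (real \<Rightarrow> 'a) \<Rightarrow> bool" where
  "solves_linear_ode L \<phi> \<longleftrightarrow> (\<forall>t. (\<phi> has_vector_derivative L (\<phi> t)) (at t))"

lemma eq_if_same_vector_derivative:
  fixes f h :: "real \<Rightarrow> 'a::real_normed_vector"
  assumes "\<And>t. (f has_vector_derivative d t) (at t)" "\<And>t. (h has_vector_derivative d t) (at t)"
    and "f s = h s"
  shows "f t = h t"
proof -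
  have "((\<lambda>t. f t - h t) has_derivative (\<lambda>_. 0)) (at t)" for t
    using has_vector_derivative_diff[OF assms(1,2)] by (simp add: has_vector_derivative_def)
  then have "f t - h t = f s - h s"
    by (intro has_derivative_zero_unique[of UNIV]) auto
  with assms(3) show ?thesis by simp
qed

text \<open>Gronwall's argument: \<open>|\<phi>|\<^sup>2 e\<^sup>-\<^sup>2\<^sup>C\<^sup>t\<close> is nonincreasing when \<open>|L| \<le> C\<close>.\<close>
lemma solves_linear_ode_vanishes_forward:
  fixes L :: "'a::euclidean_space \<Rightarrow> 'a"
  assumes L: "linear L" and \<phi>: "solves_linear_ode L \<phi>" and "\<phi> s = 0" "s \<le> t"
  shows "\<phi> t = 0"
proof -
  obtain C where C: "C > 0" "\<And>x. norm (L x) \<le> C * norm x" using linear_bounded_pos[OF L] by blast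
  define e where "e t = \<phi> t \<bullet> \<phi> t" for t
  have de: "(e has_real_derivative 2 * (\<phi> t \<bullet> L (\<phi> t))) (at t)" for t
  proof -
    have "((\<lambda>t. \<phi> t \<bullet> \<phi> t) has_vector_derivative (\<phi> t \<bullet> L (\<phi> t) + L (\<phi> t) \<bullet> \<phi> t)) (at t)"
      using \<phi> unfolding solves_linear_ode_def
      by (intro bounded_bilinear.has_vector_derivative[OF bounded_bilinear_inner]) auto
    then show ?thesis unfolding e_def has_real_derivative_iff_has_vector_derivative
      by (simp add: inner_commute)
  qed
  have bound: "\<phi> t \<bullet> L (\<phi> t) \<le> C * e t" for t
  proof -
    have "\<phi> t \<bullet> L (\<phi> t) \<le> norm (\<phi> t) * norm (L (\<phi> t))" by (rule norm_cauchy_schwarz)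
    also have "\<dots> \<le> norm (\<phi> t) * (C * norm (\<phi> t))" by (rule mult_left_mono[OF C(2)]) simp
    also have "\<dots> = C * e t" unfolding e_def by (simp add: dot_square_norm power2_eq_square)
    finally show ?thesis .
  qed
  define h where "h t = e t * exp (- 2 * C * t)" for t
  have "h t \<le> h s"
  proof (rule DERIV_nonpos_imp_nonincreasing[OF \<open>s \<le> t\<close>])
    fix x
    have "(h has_real_derivative (2 * (\<phi> x \<bullet> L (\<phi> x)) - 2 * C * e x) * exp (- 2 * C * x)) (at x)"
      unfolding h_def by (auto intro!: derivative_eq_intros de simp: algebra_simps)
    moreover have "(2 * (\<phi> x \<bullet> L (\<phi> x)) - 2 * C * e x) * exp (- 2 * C * x) \<le> 0"
      using bound[of x] by (simp add: mult_nonpos_nonneg)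
    ultimately show "\<exists>y. DERIV h x :> y \<and> y \<le> 0" by blast
  qed
  then have "e t \<le> 0" using \<open>\<phi> s = 0\<close> unfolding h_def e_def by (simp add: mult_le_0_iff)
  then show ?thesis unfolding e_def using inner_gt_zero_iff[of "\<phi> t"] by linarith
qed

lemma solves_linear_ode_reflect:
  assumes "solves_linear_ode L \<phi>"
  shows "solves_linear_ode (\<lambda>x. - L x) (\<lambda>t. \<phi> (- t))"
  unfolding solves_linear_ode_def
proof
  fix t
  have "(\<phi> has_vector_derivative L (\<phi> (- t))) (at (- t))"
    using assms unfolding solves_linear_ode_def by blast
  moreover have "(uminus has_vector_derivative - 1) (at t)"
    by (auto intro!: derivative_eq_intros)
  ultimately show "((\<lambda>t. \<phi> (- t)) has_vector_derivative - L (\<phi> (- t))) (at t)"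
    using vector_diff_chain_at[of uminus "- 1" t \<phi>] by (simp add: o_def)
qed

lemma solves_linear_ode_vanishes:
  fixes L :: "'a::euclidean_space \<Rightarrow> 'a"
  assumes L: "linear L" and \<phi>: "solves_linear_ode L \<phi>" and "\<phi> s = 0"
  shows "\<phi> t = 0"
proof (cases "s \<le> t")
  case True
  then show ?thesis using solves_linear_ode_vanishes_forward[OF L \<phi>] \<open>\<phi> s = 0\<close> by blast
next
  case False
  have "linear (\<lambda>x. - L x)" using L by (rule linear_compose_neg)
  from solves_linear_ode_vanishes_forward[OF this solves_linear_ode_reflect[OF \<phi>], of "- s" "- t"]
  show ?thesis using False \<open>\<phi> s = 0\<close> by simp
qed

lemma solves_linear_ode_add:
  "linear L \<Longrightarrow> solves_linear_ode L \<phi> \<Longrightarrow> solves_linear_ode L \<psi> \<Longrightarrow>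
    solves_linear_ode L (\<lambda>t. \<phi> t + \<psi> t)"
  unfolding solves_linear_ode_def by (auto intro!: derivative_eq_intros simp: linear_add)

lemma solves_linear_ode_scale:
  "linear L \<Longrightarrow> solves_linear_ode L \<phi> \<Longrightarrow> solves_linear_ode L (\<lambda>t. c *\<^sub>R \<phi> t)"
  unfolding solves_linear_ode_def by (auto intro!: derivative_eq_intros simp: linear_scale)

lemma solves_linear_ode_diff:
  "linear L \<Longrightarrow> solves_linear_ode L \<phi> \<Longrightarrow> solves_linear_ode L \<psi> \<Longrightarrow>
    solves_linear_ode L (\<lambda>t. \<phi> t - \<psi> t)"
  unfolding solves_linear_ode_def by (auto intro!: derivative_eq_intros simp: linear_diff)

lemma solves_linear_ode_unique:
  fixes L :: "'a::euclidean_space \<Rightarrow> 'a"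
  assumes L: "linear L" and "solves_linear_ode L \<phi>" "solves_linear_ode L \<psi>" "\<phi> s = \<psi> s"
  shows "\<phi> t = \<psi> t"
  using solves_linear_ode_vanishes[OF L solves_linear_ode_diff[OF L assms(2,3)], of s t] assms(4)
  by simp

lemma solves_linear_ode_shift:
  assumes "solves_linear_ode L \<phi>"
  shows "solves_linear_ode L (\<lambda>t. \<phi> (t + s))"
  unfolding solves_linear_ode_def
proof
  fix t
  have "(\<phi> has_vector_derivative L (\<phi> (t + s))) (at (t + s))"
    using assms unfolding solves_linear_ode_def by blast
  moreover have "((\<lambda>t. t + s) has_vector_derivative 1) (at t)"
    by (auto intro!: derivative_eq_intros)
  ultimately show "((\<lambda>t. \<phi> (t + s)) has_vector_derivative L (\<phi> (t + s))) (at t)"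
    using vector_diff_chain_at[of "\<lambda>t. t + s" 1 t \<phi>] by (simp add: o_def)
qed

lemma solves_linear_ode_rotation:
  assumes L: "linear L" and eig: "L (L y) = (- \<mu>\<^sup>2) *\<^sub>R y" and \<mu>: "\<mu> \<noteq> 0"
  shows "solves_linear_ode L (\<lambda>s. cos (\<mu> * s) *\<^sub>R y + (sin (\<mu> * s) / \<mu>) *\<^sub>R L y)"
  unfolding solves_linear_ode_def
proof
  fix s
  have "((\<lambda>s. cos (\<mu> * s) *\<^sub>R y + (sin (\<mu> * s) / \<mu>) *\<^sub>R L y) has_vector_derivative
      (- (\<mu> * sin (\<mu> * s))) *\<^sub>R y + cos (\<mu> * s) *\<^sub>R L y) (at s)"
    using \<mu> by (auto intro!: derivative_eq_intros simp: algebra_simps)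
  moreover have "L (cos (\<mu> * s) *\<^sub>R y + (sin (\<mu> * s) / \<mu>) *\<^sub>R L y)
      = (- (\<mu> * sin (\<mu> * s))) *\<^sub>R y + cos (\<mu> * s) *\<^sub>R L y"
    using \<mu> by (simp add: linear_add[OF L] linear_scale[OF L] eig power2_eq_square algebra_simps)
  ultimately show "((\<lambda>s. cos (\<mu> * s) *\<^sub>R y + (sin (\<mu> * s) / \<mu>) *\<^sub>R L y) has_vector_derivative
      L (cos (\<mu> * s) *\<^sub>R y + (sin (\<mu> * s) / \<mu>) *\<^sub>R L y)) (at s)"
    by simp
qed

section \<open>Periodic solutions of linear differential equations\<close>

locale periodic_linear_ode =
  fixes L :: "'a::euclidean_space \<Rightarrow> 'a" and f :: "real \<Rightarrow> 'a" and T :: real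
  assumes L: "linear L" and solves: "solves_linear_ode L f" and period_pos: "T > 0"
    and periodic: "f T = f 0"
begin

definition orbit_span :: "'a set" where
  "orbit_span = span (range f)"

lemma subspace_orbit_span: "subspace orbit_span"
  unfolding orbit_span_def by simp

lemma f_in_orbit_span: "f t \<in> orbit_span"
  unfolding orbit_span_def by (rule span_base) simp

lemma bounded_linear_L: "bounded_linear L"
  using L linear_conv_bounded_linear by blast

lemma f_periodic: "f (t + T) = f t"
  using solves_linear_ode_unique[OF L solves_linear_ode_shift[OF solves, of T] solves, of 0 t]
    periodic by simp

lemma periodic_solution_through:
  assumes "x \<in> orbit_span"
  shows "\<exists>\<phi>. solves_linear_ode L \<phi> \<and> \<phi> 0 = x \<and> (\<forall>t. \<phi> (t + T) = \<phi> t)"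
  using assms unfolding orbit_span_def
proof (induction rule: span_induct_alt)
  case base
  show ?case by (rule exI[of _ "\<lambda>t. 0"]) (simp add: solves_linear_ode_def linear_0[OF L])
next
  case (step c x y)
  then obtain s \<phi> where x: "x = f s" and \<phi>: "solves_linear_ode L \<phi>" "\<phi> 0 = y" "\<forall>t. \<phi> (t + T) = \<phi> t"
    by blast
  have "solves_linear_ode L (\<lambda>t. c *\<^sub>R f (t + s) + \<phi> t)"
    using solves_linear_ode_scale[OF L solves_linear_ode_shift[OF solves, of s], of c]
    by (intro solves_linear_ode_add[OF L] \<phi>(1))
  moreover have "f (t + T + s) = f (t + s)" for t using f_periodic[of "t + s"] by (simp add: add_ac)
  ultimately show ?case using x \<phi>(2,3) by (intro exI[of _ "\<lambda>t. c *\<^sub>R f (t + s) + \<phi> t"]) simp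
qed

definition orbit_proj :: "'a \<Rightarrow> 'a" where
  "orbit_proj x = (SOME p. p \<in> orbit_span \<and> (\<forall>y\<in>orbit_span. p \<bullet> y = x \<bullet> y))"

lemma orbit_proj: "orbit_proj x \<in> orbit_span" "y \<in> orbit_span \<Longrightarrow> orbit_proj x \<bullet> y = x \<bullet> y"
proof -
  have "\<exists>p\<in>span orbit_span. \<exists>z. (\<forall>w\<in>span orbit_span. orthogonal z w) \<and> x = p + z"
    by (rule orthogonal_subspace_decomp_exists[of orbit_span x]) blast
  then obtain p z where "p \<in> span orbit_span" "\<And>w. w \<in> span orbit_span \<Longrightarrow> orthogonal z w" "x = p + z"
    by blast
  moreover have "span orbit_span = orbit_span" using subspace_orbit_span by (rule span_eq_iff[THEN iffD2])
  ultimately have "\<exists>p. p \<in> orbit_span \<and> (\<forall>y\<in>orbit_span. p \<bullet> y = x \<bullet> y)"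
    by (auto simp: orthogonal_def inner_add_left)
  from someI_ex[OF this] show "orbit_proj x \<in> orbit_span" "y \<in> orbit_span \<Longrightarrow> orbit_proj x \<bullet> y = x \<bullet> y"
    unfolding orbit_proj_def by auto
qed

lemma orbit_proj_unique:
  assumes "p \<in> orbit_span" "\<And>y. y \<in> orbit_span \<Longrightarrow> p \<bullet> y = x \<bullet> y"
  shows "orbit_proj x = p"
proof -
  have d: "orbit_proj x - p \<in> orbit_span"
    using orbit_proj(1) assms(1) subspace_orbit_span by (simp add: subspace_diff)
  have "(orbit_proj x - p) \<bullet> (orbit_proj x - p) = 0"
    using orbit_proj(2)[OF d] assms(2)[OF d] by (simp add: inner_diff_left)
  then show ?thesis by simp
qed

lemma orbit_proj_id: "u \<in> orbit_span \<Longrightarrow> orbit_proj u = u"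
  by (rule orbit_proj_unique) auto

lemma orbit_proj_add: "orbit_proj (x + y) = orbit_proj x + orbit_proj y"
proof (rule orbit_proj_unique)
  show "orbit_proj x + orbit_proj y \<in> orbit_span"
    using orbit_proj(1) subspace_orbit_span by (simp add: subspace_add)
  show "(orbit_proj x + orbit_proj y) \<bullet> w = (x + y) \<bullet> w" if "w \<in> orbit_span" for w
    using orbit_proj(2)[OF that] by (simp add: inner_add_left)
qed

lemma orbit_proj_scale: "orbit_proj (c *\<^sub>R x) = c *\<^sub>R orbit_proj x"
proof (rule orbit_proj_unique)
  show "c *\<^sub>R orbit_proj x \<in> orbit_span"
    using orbit_proj(1) subspace_orbit_span by (simp add: subspace_scale)
  show "c *\<^sub>R orbit_proj x \<bullet> w = c *\<^sub>R x \<bullet> w" if "w \<in> orbit_span" for w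
    using orbit_proj(2)[OF that] by simp
qed

lemma linear_orbit_proj: "linear orbit_proj"
  by (rule linearI) (simp_all add: orbit_proj_add orbit_proj_scale)

definition orbit_perp :: "'a \<Rightarrow> 'a" where
  "orbit_perp x = x - orbit_proj x"

lemma linear_orbit_perp: "linear orbit_perp"
  unfolding orbit_perp_def by (intro linear_compose_sub linear_ident linear_orbit_proj)

lemma orbit_perp_eq_0_iff: "orbit_perp x = 0 \<longleftrightarrow> x \<in> orbit_span"
proof
  assume "orbit_perp x = 0"
  then have "x = orbit_proj x" unfolding orbit_perp_def by simp
  then show "x \<in> orbit_span" by (subst \<open>x = orbit_proj x\<close>) (rule orbit_proj(1))
qed (simp add: orbit_perp_def orbit_proj_id)

lemma L_orbit_span: "x \<in> orbit_span \<Longrightarrow> L x \<in> orbit_span"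
proof -
  have "L (f t) \<in> orbit_span" for t
  proof -
    have "bounded_linear orbit_perp"
      using linear_orbit_perp linear_conv_bounded_linear by blast
    moreover have "(f has_vector_derivative L (f t)) (at t)"
      using solves unfolding solves_linear_ode_def by blast
    ultimately have "((\<lambda>s. orbit_perp (f s)) has_vector_derivative orbit_perp (L (f t))) (at t)"
      by (rule bounded_linear.has_vector_derivative)
    moreover have "(\<lambda>s. orbit_perp (f s)) = (\<lambda>s. 0)"
      using f_in_orbit_span orbit_perp_eq_0_iff by auto
    ultimately have "((\<lambda>s. 0) has_vector_derivative orbit_perp (L (f t))) (at t)"
      by simp
    then have "orbit_perp (L (f t)) = 0"
      using vector_derivative_unique_at[OF _ has_vector_derivative_const] by blast
    then show ?thesis using orbit_perp_eq_0_iff by simp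
  qed
  then have "span (L ` range f) \<subseteq> orbit_span"
    by (intro span_minimal[OF _ subspace_orbit_span]) auto
  moreover assume "x \<in> orbit_span"
  then have "L x \<in> L ` span (range f)" unfolding orbit_span_def by (rule imageI)
  then have "L x \<in> span (L ` range f)" by (simp add: linear_span_image[OF L])
  ultimately show "L x \<in> orbit_span" by blast
qed

definition flow :: "'a \<Rightarrow> real \<Rightarrow> 'a" where
  "flow x = (SOME \<phi>. solves_linear_ode L \<phi> \<and> \<phi> 0 = orbit_proj x \<and> (\<forall>t. \<phi> (t + T) = \<phi> t))"

lemma flow: "solves_linear_ode L (flow x)" "flow x 0 = orbit_proj x" "flow x (t + T) = flow x t"
  using someI_ex[OF periodic_solution_through[OF orbit_proj(1)[of x]]] unfolding flow_def by auto

lemma flow_add: "flow (x + y) t = flow x t + flow y t"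
  using solves_linear_ode_unique[OF L flow(1) solves_linear_ode_add[OF L flow(1) flow(1)],
      of "x + y" 0 x y t]
  by (simp add: flow(2) linear_add[OF linear_orbit_proj])

lemma flow_scale: "flow (c *\<^sub>R x) t = c *\<^sub>R flow x t"
  using solves_linear_ode_unique[OF L flow(1) solves_linear_ode_scale[OF L flow(1)], of "c *\<^sub>R x" 0 c x t]
  by (simp add: flow(2) linear_scale[OF linear_orbit_proj])

lemma flow_L:
  assumes "x \<in> orbit_span"
  shows "flow (L x) t = L (flow x t)"
proof -
  have "solves_linear_ode L (\<lambda>t. L (flow x t))"
    using flow(1)[of x] unfolding solves_linear_ode_def
    by (auto intro: bounded_linear.has_vector_derivative[OF bounded_linear_L])
  moreover have "flow (L x) 0 = L (flow x 0)"
    using assms by (simp add: flow(2) orbit_proj_id L_orbit_span)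
  ultimately show ?thesis using solves_linear_ode_unique[OF L flow(1)] by blast
qed

lemma flow_nonzero: "orbit_proj x \<noteq> 0 \<Longrightarrow> flow x t \<noteq> 0"
  using solves_linear_ode_vanishes[OF L flow(1), of x t 0] flow(2) by auto

lemma continuous_on_flow: "continuous_on S (flow x)"
  using flow(1)[of x] unfolding solves_linear_ode_def
  by (meson continuous_at_imp_continuous_on has_vector_derivative_continuous)

lemma flow_inner_integrable: "(\<lambda>s. flow x s \<bullet> flow y s) integrable_on {0..T}"
  by (intro integrable_continuous_interval continuous_on_inner continuous_on_flow)

text \<open>Averaging the inner product along the periodic flow makes \<open>L\<close> skew on the orbit span.\<close>
definition avg_inner :: "'a \<Rightarrow> 'a \<Rightarrow> real" where
  "avg_inner x y = integral {0..T} (\<lambda>s. flow x s \<bullet> flow y s) + orbit_perp x \<bullet> orbit_perp y"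

lemma avg_inner_sym: "avg_inner x y = avg_inner y x"
  unfolding avg_inner_def by (simp add: inner_commute)

lemma avg_inner_add_left: "avg_inner (x + x') y = avg_inner x y + avg_inner x' y"
proof -
  have "integral {0..T} (\<lambda>s. flow (x + x') s \<bullet> flow y s)
      = integral {0..T} (\<lambda>s. flow x s \<bullet> flow y s + flow x' s \<bullet> flow y s)"
    by (simp add: flow_add inner_add_left)
  also have "\<dots> = integral {0..T} (\<lambda>s. flow x s \<bullet> flow y s) + integral {0..T} (\<lambda>s. flow x' s \<bullet> flow y s)"
    by (rule integral_add[OF flow_inner_integrable flow_inner_integrable])
  finally show ?thesis
    unfolding avg_inner_def by (simp add: linear_add[OF linear_orbit_perp] inner_add_left)
qed

lemma avg_inner_scale_left: "avg_inner (c *\<^sub>R x) y = c * avg_inner x y"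
proof -
  have "integral {0..T} (\<lambda>s. flow (c *\<^sub>R x) s \<bullet> flow y s) = integral {0..T} (\<lambda>s. c * (flow x s \<bullet> flow y s))"
    by (simp add: flow_scale)
  also have "\<dots> = c * integral {0..T} (\<lambda>s. flow x s \<bullet> flow y s)"
    by (rule integral_mult[OF flow_inner_integrable, symmetric])
  finally show ?thesis
    unfolding avg_inner_def by (simp add: linear_scale[OF linear_orbit_perp] algebra_simps)
qed

lemma bilinear_avg_inner: "bilinear avg_inner"
proof -
  have "linear (\<lambda>x. avg_inner x y)" for y
    by (rule linearI) (simp_all add: avg_inner_add_left avg_inner_scale_left)
  moreover have "linear (\<lambda>y. avg_inner x y)" for x
    by (rule linearI) (simp_all add: avg_inner_sym[of x] avg_inner_add_left avg_inner_scale_left)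
  ultimately show ?thesis unfolding bilinear_def by blast
qed

lemma avg_inner_pos:
  assumes "x \<noteq> 0"
  shows "avg_inner x x > 0"
proof -
  have int_nonneg: "integral {0..T} (\<lambda>s. flow x s \<bullet> flow x s) \<ge> 0"
    by (rule integral_nonneg[OF flow_inner_integrable]) simp
  show ?thesis
  proof (cases "orbit_proj x = 0")
    case True
    then have "orbit_perp x \<bullet> orbit_perp x > 0" using assms unfolding orbit_perp_def by simp
    then show ?thesis unfolding avg_inner_def using int_nonneg by linarith
  next
    case False
    have cont: "continuous_on {0..T} (\<lambda>s. flow x s \<bullet> flow x s)"
      by (intro continuous_on_inner continuous_on_flow)
    have "\<exists>s0\<in>{0..T}. \<forall>s\<in>{0..T}. flow x s0 \<bullet> flow x s0 \<le> flow x s \<bullet> flow x s"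
      using continuous_attains_inf[OF compact_Icc _ cont] period_pos by auto
    then obtain s0 where s0_min: "\<And>s. s \<in> {0..T} \<Longrightarrow> flow x s0 \<bullet> flow x s0 \<le> flow x s \<bullet> flow x s"
      by blast
    define m where "m = flow x s0 \<bullet> flow x s0"
    have "m > 0" unfolding m_def using flow_nonzero[OF False] by simp
    have "integral {0..T} (\<lambda>s. m) \<le> integral {0..T} (\<lambda>s. flow x s \<bullet> flow x s)"
      by (rule integral_le[OF integrable_continuous_interval[OF continuous_on_const] flow_inner_integrable])
        (use s0_min m_def in auto)
    moreover have "integral {0..T} (\<lambda>s. m) = T * m" using period_pos by simp
    moreover have "T * m > 0" using period_pos \<open>m > 0\<close> by simp
    ultimately show ?thesis unfolding avg_inner_def using inner_ge_zero[of "orbit_perp x"] by linarith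
  qed
qed

lemma avg_inner_skew:
  assumes x: "x \<in> orbit_span" and y: "y \<in> orbit_span"
  shows "avg_inner (L x) y + avg_inner x (L y) = 0"
proof -
  have "((\<lambda>s. flow x s \<bullet> flow y s) has_vector_derivative
      (flow x s \<bullet> L (flow y s) + L (flow x s) \<bullet> flow y s)) (at s within {0..T})" for s
    using flow(1)[of x] flow(1)[of y] unfolding solves_linear_ode_def
    by (intro bounded_bilinear.has_vector_derivative[OF bounded_bilinear_inner])
      (auto intro: has_vector_derivative_at_within)
  then have "((\<lambda>s. flow x s \<bullet> L (flow y s) + L (flow x s) \<bullet> flow y s) has_integral
       (flow x T \<bullet> flow y T - flow x 0 \<bullet> flow y 0)) {0..T}"
    using period_pos by (intro fundamental_theorem_of_calculus) auto
  moreover have "flow x T \<bullet> flow y T - flow x 0 \<bullet> flow y 0 = 0"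
    using flow(3)[of x 0] flow(3)[of y 0] by simp
  ultimately have I: "integral {0..T} (\<lambda>s. flow x s \<bullet> L (flow y s) + L (flow x s) \<bullet> flow y s) = 0"
    by (simp add: integral_unique)
  have "orbit_perp x = 0" "orbit_perp y = 0" "orbit_perp (L x) = 0" "orbit_perp (L y) = 0"
    using x y L_orbit_span orbit_perp_eq_0_iff by auto
  then have "avg_inner (L x) y + avg_inner x (L y) = integral {0..T} (\<lambda>s. L (flow x s) \<bullet> flow y s)
        + integral {0..T} (\<lambda>s. flow x s \<bullet> L (flow y s))"
    unfolding avg_inner_def using x y by (simp add: flow_L)
  also have "\<dots> = integral {0..T} (\<lambda>s. L (flow x s) \<bullet> flow y s + flow x s \<bullet> L (flow y s))"
    using integral_add[OF flow_inner_integrable[of "L x" y] flow_inner_integrable[of x "L y"]] x y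
    by (simp add: flow_L)
  also have "\<dots> = 0" using I by (simp add: add.commute)
  finally show ?thesis .
qed

definition resonant_span :: "'a set" where
  "resonant_span = span ({y. L y = 0} \<union>
     {y. \<exists>\<mu>>0. L (L y) = (- \<mu>\<^sup>2) *\<^sub>R y \<and> (\<exists>k::int. \<mu> * T = 2 * pi * k)})"

lemma L_resonant_span: "x \<in> resonant_span \<Longrightarrow> L x \<in> resonant_span"
proof -
  let ?K = "{y. L y = 0}"
  let ?E = "{y. \<exists>\<mu>>0. L (L y) = (- \<mu>\<^sup>2) *\<^sub>R y \<and> (\<exists>k::int. \<mu> * T = 2 * pi * k)}"
  have "L ` (?K \<union> ?E) \<subseteq> ?K \<union> ?E"
  proof (rule image_subsetI)
    fix y assume y: "y \<in> ?K \<union> ?E"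
    show "L y \<in> ?K \<union> ?E"
    proof (cases "L y = 0")
      case True
      then show ?thesis by (simp add: linear_0[OF L])
    next
      case False
      then obtain \<mu> k where \<mu>: "\<mu> > 0" "\<mu> * T = 2 * pi * of_int k"
        and eig: "L (L y) = (- \<mu>\<^sup>2) *\<^sub>R y"
        using y by blast
      have "L (L (L y)) = (- \<mu>\<^sup>2) *\<^sub>R L y" by (simp add: eig linear_scale[OF L] linear_neg[OF L])
      with \<mu> have "L y \<in> ?E" by blast
      then show ?thesis by (rule UnI2)
    qed
  qed
  then have "span (L ` (?K \<union> ?E)) \<subseteq> resonant_span"
    unfolding resonant_span_def by (rule span_mono)
  moreover assume "x \<in> resonant_span"
  then have "L x \<in> L ` span (?K \<union> ?E)" unfolding resonant_span_def by (rule imageI)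
  then have "L x \<in> span (L ` (?K \<union> ?E))" by (simp add: linear_span_image[OF L])
  ultimately show "L x \<in> resonant_span" by blast
qed

text \<open>On the orbit span \<open>L\<close> is skew for the positive definite form \<open>avg_inner\<close>, so an
  eigenvector of \<open>L\<^sup>2\<close> is either in the kernel of \<open>L\<close> or spans, with its image under \<open>L\<close>, a
  rotation plane whose period must divide \<open>T\<close>.\<close>
lemma eigenvector_in_resonant_span:
  assumes y: "y \<in> orbit_span" "y \<noteq> 0" and eig: "L (L y) = M *\<^sub>R y"
  shows "y \<in> resonant_span"
proof (cases "L y = 0")
  case True
  then show ?thesis unfolding resonant_span_def by (intro span_base) simp
next
  case False
  have "avg_inner (L y) (L y) + avg_inner y (L (L y)) = 0"
    using avg_inner_skew[OF y(1) L_orbit_span[OF y(1)]] .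
  then have "M * avg_inner y y < 0"
    using avg_inner_pos[OF False] eig by (simp add: bilinear_rmul[OF bilinear_avg_inner])
  then have "M < 0" using avg_inner_pos[OF y(2)] by (simp add: mult_less_0_iff)
  define \<mu> where "\<mu> = sqrt (- M)"
  have \<mu>: "\<mu> > 0" "L (L y) = (- \<mu>\<^sup>2) *\<^sub>R y" unfolding \<mu>_def using \<open>M < 0\<close> eig by auto
  have "flow y 0 = y" using flow(2) orbit_proj_id[OF y(1)] by simp
  then have flow_y: "flow y t = cos (\<mu> * t) *\<^sub>R y + (sin (\<mu> * t) / \<mu>) *\<^sub>R L y" for t
    using solves_linear_ode_unique[OF L flow(1) solves_linear_ode_rotation[OF L \<mu>(2)], of y 0 t] \<mu>
    by simp
  have "flow y T = flow y 0" using flow(3)[of y 0] by simp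
  then have "avg_inner (cos (\<mu> * T) *\<^sub>R y + (sin (\<mu> * T) / \<mu>) *\<^sub>R L y) y = avg_inner y y"
    using flow_y[of T] flow_y[of 0] by simp
  moreover have "avg_inner (L y) y = 0"
    using avg_inner_skew[OF y(1) y(1)] avg_inner_sym[of y "L y"] by simp
  ultimately have "cos (\<mu> * T) * avg_inner y y = avg_inner y y"
    by (simp add: bilinear_ladd[OF bilinear_avg_inner] bilinear_lmul[OF bilinear_avg_inner])
  then have "cos (\<mu> * T) = 1" using avg_inner_pos[OF y(2)] by simp
  then obtain n :: int where "\<mu> * T = real_of_int n * 2 * pi" using cos_one_2pi_int by blast
  then show ?thesis
    unfolding resonant_span_def using \<mu>
    by (intro span_base UnI2 CollectI exI[of _ \<mu>]) (auto intro!: exI[of _ n] simp: algebra_simps)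
qed

text \<open>If not, the \<open>avg_inner\<close>-orthogonal complement of the resonant part of the orbit span is a
  nonzero \<open>L\<close>-invariant subspace on which \<open>L\<^sup>2\<close> is self-adjoint, hence contains an eigenvector.\<close>
lemma orbit_span_subset_resonant_span: "orbit_span \<subseteq> resonant_span"
proof (rule ccontr)
  assume "\<not> orbit_span \<subseteq> resonant_span"
  then obtain x where x: "x \<in> orbit_span" "x \<notin> resonant_span" by blast
  define P where "P = resonant_span \<inter> orbit_span"
  have "subspace P"
    unfolding P_def resonant_span_def using subspace_orbit_span by (simp add: subspace_inter)
  moreover have "\<And>z. z \<in> P \<Longrightarrow> \<forall>y\<in>P. avg_inner z y = 0 \<Longrightarrow> z = 0"
    using avg_inner_pos by (metis less_irrefl)
  moreover have "linear (avg_inner x)" using bilinear_avg_inner by (simp add: bilinear_def)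
  ultimately obtain p where p: "p \<in> P" "\<forall>y\<in>P. avg_inner p y = avg_inner x y"
    using nondegenerate_bilinear_representation[OF bilinear_avg_inner] by blast
  define R where "R = {y \<in> orbit_span. \<forall>q\<in>P. avg_inner y q = 0}"
  have R_orbit: "y \<in> R \<Longrightarrow> y \<in> orbit_span" for y unfolding R_def by blast
  have "x - p \<in> orbit_span" using x(1) p(1) subspace_orbit_span unfolding P_def by (simp add: subspace_diff)
  then have "x - p \<in> R" unfolding R_def using p(2) by (simp add: bilinear_lsub[OF bilinear_avg_inner])
  moreover have "x - p \<noteq> 0" using x(2) p(1) unfolding P_def by auto
  moreover have "subspace R" unfolding R_def subspace_def using subspace_orbit_span
    by (auto simp: bilinear_ladd[OF bilinear_avg_inner] bilinear_lmul[OF bilinear_avg_inner]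
        bilinear_lzero[OF bilinear_avg_inner] subspace_add subspace_scale subspace_0)
  moreover have L_R: "L y \<in> R" if y: "y \<in> R" for y
  proof -
    have "avg_inner (L y) q = 0" if q: "q \<in> P" for q
    proof -
      have "L q \<in> P" using q L_resonant_span L_orbit_span unfolding P_def by blast
      then have "avg_inner y (L q) = 0" using y unfolding R_def by blast
      moreover have "q \<in> orbit_span" using q unfolding P_def by blast
      then have "avg_inner (L y) q + avg_inner y (L q) = 0" by (rule avg_inner_skew[OF R_orbit[OF y]])
      ultimately show ?thesis by linarith
    qed
    then show ?thesis unfolding R_def using L_orbit_span[OF R_orbit[OF y]] by blast
  qed
  moreover have "avg_inner (L (L y)) y' = avg_inner y (L (L y'))" if "y \<in> R" "y' \<in> R" for y y'
    using avg_inner_skew[OF R_orbit[OF L_R[OF that(1)]] R_orbit[OF that(2)]]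
      avg_inner_skew[OF R_orbit[OF that(1)] R_orbit[OF L_R[OF that(2)]]] by linarith
  moreover have "linear (\<lambda>y. L (L y))" using linear_compose[OF L L] by (simp add: o_def)
  ultimately obtain y M where y: "y \<in> R" "y \<noteq> 0" "L (L y) = M *\<^sub>R y"
    using selfadjoint_has_eigenvector[OF bilinear_avg_inner avg_inner_sym avg_inner_pos,
        where R = R and r = "x - p" and S = "\<lambda>y. L (L y)"]
    by blast
  then have "y \<in> P" using eigenvector_in_resonant_span R_orbit unfolding P_def by blast
  then have "avg_inner y y = 0" using y(1) unfolding R_def by blast
  then show False using avg_inner_pos[OF y(2)] by simp
qed

lemma initial_value_in_resonant_span: "f 0 \<in> resonant_span"
  using orbit_span_subset_resonant_span f_in_orbit_span by blast

end

section \<open>Metric two-step nilpotent Lie algebras\<close>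

locale metric_two_step_nilpotent =
  fixes br :: "'n::euclidean_space \<Rightarrow> 'n \<Rightarrow> 'n" and g :: "'n \<Rightarrow> 'n \<Rightarrow> real"
  assumes nil: "two_step_nilpotent br" and ip: "inner_prod g"
    and zndeg: "nondeg_on g (lie_center br)"
begin

abbreviation "Z \<equiv> lie_center br"
abbreviation "V \<equiv> vpart g br"
abbreviation "J \<equiv> Jmap g br"

lemma bilinear_br: "bilinear br" using nil unfolding two_step_nilpotent_def lie_bracket_def by auto
lemma br_self[simp]: "br x x = 0" using nil unfolding two_step_nilpotent_def lie_bracket_def by auto
lemma br_br[simp]: "br (br x y) w = 0" using nil unfolding two_step_nilpotent_def by auto
lemma bilinear_g: "bilinear g" using ip unfolding inner_prod_def by auto
lemma g_sym: "g x y = g y x" using ip unfolding inner_prod_def by auto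
lemma g_nondegenerate: "(\<And>y. g x y = 0) \<Longrightarrow> x = 0" using ip unfolding inner_prod_def by auto

lemmas br_simps[simp] = bilinear_ladd[OF bilinear_br] bilinear_radd[OF bilinear_br] bilinear_lmul[OF bilinear_br]
  bilinear_rmul[OF bilinear_br] bilinear_lneg[OF bilinear_br] bilinear_rneg[OF bilinear_br]
  bilinear_lzero[OF bilinear_br] bilinear_rzero[OF bilinear_br] bilinear_lsub[OF bilinear_br] bilinear_rsub[OF bilinear_br]
lemmas g_simps[simp] = bilinear_ladd[OF bilinear_g] bilinear_radd[OF bilinear_g] bilinear_lmul[OF bilinear_g]
  bilinear_rmul[OF bilinear_g] bilinear_lneg[OF bilinear_g] bilinear_rneg[OF bilinear_g]
  bilinear_lzero[OF bilinear_g] bilinear_rzero[OF bilinear_g] bilinear_lsub[OF bilinear_g] bilinear_rsub[OF bilinear_g]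

lemma br_antisym: "br x y = - br y x"
proof -
  have "br (x+y) (x+y) = br x (x+y) + br y (x+y)" by (rule bilinear_ladd[OF bilinear_br])
  then have "0 = br x y + br y x" by simp
  then show ?thesis by (metis eq_neg_iff_add_eq_0)
qed

lemma br_in_center[simp]: "br x y \<in> Z" unfolding lie_center_def by simp
lemma center_br_left[simp]: "z \<in> Z \<Longrightarrow> br z x = 0" unfolding lie_center_def by simp
lemma center_br_right[simp]: "z \<in> Z \<Longrightarrow> br x z = 0" using br_antisym center_br_left by (metis neg_equal_0_iff_equal)

lemma subspace_center: "subspace Z"
  unfolding subspace_def lie_center_def by simp

lemma mem_vpart_iff: "v \<in> V \<longleftrightarrow> (\<forall>z\<in>Z. g v z = 0)"
  unfolding vpart_def orth_compl_def by simp

lemma subspace_vpart: "subspace V"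
  unfolding subspace_def by (auto simp: mem_vpart_iff)

lemma g_ext: "(\<And>y. g u y = g w y) \<Longrightarrow> u = w"
proof -
  assume "\<And>y. g u y = g w y"
  then have "\<And>y. g (u - w) y = 0" by simp
  then have "u - w = 0" by (rule g_nondegenerate)
  then show "u = w" by simp
qed

lemma linear_g: "linear (g x)" using bilinear_g by (simp add: bilinear_def)
lemma linear_br: "linear (br x)" using bilinear_br by (simp add: bilinear_def)

lemma center_vpart_decomp: "\<exists>xz\<in>Z. x - xz \<in> V"
proof -
  have nd: "\<And>x. x \<in> Z \<Longrightarrow> (\<forall>y\<in>Z. g x y = 0) \<Longrightarrow> x = 0"
    using zndeg unfolding nondeg_on_def by blast
  obtain w where w: "w \<in> Z" "\<forall>y\<in>Z. g w y = g x y"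
    using nondegenerate_bilinear_representation[OF bilinear_g subspace_center nd linear_g] by blast
  then have "x - w \<in> V" unfolding mem_vpart_iff by simp
  then show ?thesis using w(1) by blast
qed

lemma vpart_nondegenerate: "v \<in> V \<Longrightarrow> (\<forall>y\<in>V. g v y = 0) \<Longrightarrow> v = 0"
proof -
  assume v: "v \<in> V" "\<forall>y\<in>V. g v y = 0"
  show "v = 0"
  proof (rule g_nondegenerate)
    fix y
    obtain yz where yz: "yz \<in> Z" "y - yz \<in> V" using center_vpart_decomp by blast
    have "g v y = g v yz + g v (y - yz)" by simp
    also have "g v (y - yz) = 0" using v(2) yz(2) by blast
    also have "g v yz = 0" using v(1) yz(1) unfolding mem_vpart_iff by blast
    finally show "g v y = 0" by simp
  qed
qed

lemma Jmap_characterization: "J a b \<in> V \<and> (\<forall>y. g (J a b) y = g a (br b y))"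
proof -
  have nd: "\<And>x. x \<in> UNIV \<Longrightarrow> (\<forall>y\<in>UNIV. g x y = 0) \<Longrightarrow> x = 0"
    using g_nondegenerate by blast
  have l: "linear (\<lambda>y. g a (br b y))"
    using linear_compose[OF linear_br linear_g] by (simp add: o_def)
  obtain w where w: "\<forall>y. g w y = g a (br b y)"
    using nondegenerate_bilinear_representation[OF bilinear_g subspace_UNIV nd l] by blast
  have wV: "w \<in> V" unfolding mem_vpart_iff using w by simp
  have "J a b = w"
    unfolding Jmap_def
  proof (rule the_equality)
    show "w \<in> V \<and> (\<forall>y\<in>V. g w y = g a (br b y))" using wV w by simp
  next
    fix w' assume w': "w' \<in> V \<and> (\<forall>y\<in>V. g w' y = g a (br b y))"
    have "w' - w = 0"
      by (rule vpart_nondegenerate) (use w' wV w subspace_vpart in \<open>auto intro: subspace_diff\<close>)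
    then show "w' = w" by simp
  qed
  then show ?thesis using w wV by simp
qed

lemma Jmap_in_vpart[simp]: "J a b \<in> V" using Jmap_characterization by blast
lemma g_Jmap: "g (J a b) y = g a (br b y)" using Jmap_characterization by blast

lemma Jmap_add_left: "J (a + a') b = J a b + J a' b" by (rule g_ext) (simp add: g_Jmap)
lemma Jmap_add_right: "J a (b + b') = J a b + J a b'" by (rule g_ext) (simp add: g_Jmap)
lemma Jmap_scale_left: "J (c *\<^sub>R a) b = c *\<^sub>R J a b" by (rule g_ext) (simp add: g_Jmap)
lemma Jmap_scale_right: "J a (c *\<^sub>R b) = c *\<^sub>R J a b" by (rule g_ext) (simp add: g_Jmap)
lemma Jmap_neg_left: "J (- a) b = - J a b" by (rule g_ext) (simp add: g_Jmap)
lemma Jmap_neg_right: "J a (- b) = - J a b" by (rule g_ext) (simp add: g_Jmap)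
lemma Jmap_diff_left: "J (a - a') b = J a b - J a' b" by (rule g_ext) (simp add: g_Jmap)
lemma Jmap_diff_right: "J a (b - b') = J a b - J a b'" by (rule g_ext) (simp add: g_Jmap)
lemma Jmap_zero_left: "J 0 b = 0" by (rule g_ext) (simp add: g_Jmap)
lemma Jmap_zero_right: "J a 0 = 0" by (rule g_ext) (simp add: g_Jmap)
lemmas Jmap_simps[simp] = Jmap_add_left Jmap_add_right Jmap_scale_left Jmap_scale_right Jmap_neg_left Jmap_neg_right Jmap_diff_left Jmap_diff_right Jmap_zero_left Jmap_zero_right

lemma Jmap_center_right[simp]: "b \<in> Z \<Longrightarrow> J a b = 0" by (rule g_ext) (simp add: g_Jmap)
lemma Jmap_vpart_left[simp]: "a \<in> V \<Longrightarrow> J a b = 0"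
  by (rule g_ext) (simp add: g_Jmap mem_vpart_iff)
lemma Jmap_cong_left: "(\<And>z. z \<in> Z \<Longrightarrow> g a z = g a' z) \<Longrightarrow> J a b = J a' b"
  by (rule g_ext) (simp add: g_Jmap)

lemma linear_Jmap: "linear (J a)" by (rule linearI) simp_all
lemma linear_Jmap_left: "linear (\<lambda>a. J a b)" by (rule linearI) simp_all

lemma lc_conn_eq: "lc_conn g br x y = (1/2) *\<^sub>R (br x y - J x y - J y x)"
proof -
  define u0 where "u0 = (1/2) *\<^sub>R (br x y - J x y - J y x)"
  have key: "2 * g u0 w = g (br x y) w - g (br y w) x + g (br w x) y" for w
  proof -
    have "2 * g u0 w = g (br x y) w - g (J x y) w - g (J y x) w" unfolding u0_def by simp
    also have "\<dots> = g (br x y) w - g x (br y w) - g y (br x w)" by (simp add: g_Jmap)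
    also have "\<dots> = g (br x y) w - g (br y w) x + g (br w x) y"
      using g_sym[of x "br y w"] g_sym[of y "br w x"] br_antisym[of w x] by simp
    finally show ?thesis .
  qed
  have "lc_conn g br x y = u0"
    unfolding lc_conn_def
  proof (rule the_equality)
    show "\<forall>w. 2 * g u0 w = g (br x y) w - g (br y w) x + g (br w x) y" using key by blast
  next
    fix u assume u: "\<forall>w. 2 * g u w = g (br x y) w - g (br y w) x + g (br w x) y"
    show "u = u0"
    proof (rule g_ext)
      fix w have "2 * g u w = 2 * g u0 w" using u key[of w] by simp
      then show "g u w = g u0 w" by simp
    qed
  qed
  then show ?thesis unfolding u0_def .
qed

lemma linear_lc_conn: "linear (lc_conn g br x)"
  by (rule linearI) (simp_all add: lc_conn_eq algebra_simps)

lemma jacobi_field_const_iff: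
  assumes c: "\<And>t. c t = c0"
  shows "jacobi_field g br c Y \<longleftrightarrow> (\<exists>Y1 Y2. \<forall>t. (Y has_vector_derivative Y1 t) (at t) \<and>
      (Y1 has_vector_derivative Y2 t) (at t) \<and>
      Y2 t + 2 *\<^sub>R lc_conn g br c0 (Y1 t) + lc_conn g br c0 (lc_conn g br c0 (Y t))
        + curv g br (Y t) c0 c0 = 0)"
proof -
  let ?N = "lc_conn g br c0"
  have bN: "bounded_linear ?N" using linear_lc_conn linear_conv_bounded_linear by blast
  have lN: "linear ?N" by (rule linear_lc_conn)
  show ?thesis
  proof
    assume "jacobi_field g br c Y"
    then obtain Y1 W1 where h: "\<And>t. (Y has_vector_derivative Y1 t) (at t)"
      "\<And>t. ((\<lambda>s. Y1 s + ?N (Y s)) has_vector_derivative W1 t) (at t)"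
      "\<And>t. W1 t + ?N (Y1 t + ?N (Y t)) + curv g br (Y t) c0 c0 = 0"
      unfolding jacobi_field_def c by blast
    define Y2 where "Y2 t = W1 t - ?N (Y1 t)" for t
    have d: "(Y1 has_vector_derivative Y2 t) (at t)" for t
    proof -
      have "((\<lambda>s. ?N (Y s)) has_vector_derivative ?N (Y1 t)) (at t)"
        by (rule bounded_linear.has_vector_derivative[OF bN h(1)])
      from has_vector_derivative_diff[OF h(2) this] show ?thesis unfolding Y2_def by simp
    qed
    have e: "Y2 t + 2 *\<^sub>R ?N (Y1 t) + ?N (?N (Y t)) + curv g br (Y t) c0 c0 = 0" for t
      using h(3)[of t] unfolding Y2_def by (simp add: linear_add[OF lN] scaleR_2 algebra_simps)
    show "\<exists>Y1 Y2. \<forall>t. (Y has_vector_derivative Y1 t) (at t) \<and>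
      (Y1 has_vector_derivative Y2 t) (at t) \<and>
      Y2 t + 2 *\<^sub>R ?N (Y1 t) + ?N (?N (Y t)) + curv g br (Y t) c0 c0 = 0"
      using h(1) d e by blast
  next
    assume "\<exists>Y1 Y2. \<forall>t. (Y has_vector_derivative Y1 t) (at t) \<and>
      (Y1 has_vector_derivative Y2 t) (at t) \<and>
      Y2 t + 2 *\<^sub>R ?N (Y1 t) + ?N (?N (Y t)) + curv g br (Y t) c0 c0 = 0"
    then obtain Y1 Y2 where h: "\<And>t. (Y has_vector_derivative Y1 t) (at t)"
      "\<And>t. (Y1 has_vector_derivative Y2 t) (at t)"
      "\<And>t. Y2 t + 2 *\<^sub>R ?N (Y1 t) + ?N (?N (Y t)) + curv g br (Y t) c0 c0 = 0" by blast
    have d: "((\<lambda>s. Y1 s + ?N (Y s)) has_vector_derivative (Y2 t + ?N (Y1 t))) (at t)" for t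
      by (intro has_vector_derivative_add h(2) bounded_linear.has_vector_derivative[OF bN h(1)])
    have e: "(Y2 t + ?N (Y1 t)) + ?N (Y1 t + ?N (Y t)) + curv g br (Y t) c0 c0 = 0" for t
      using h(3)[of t] by (simp add: linear_add[OF lN] scaleR_2 algebra_simps)
    show "jacobi_field g br c Y" unfolding jacobi_field_def c
      by (intro exI[of _ Y1] exI[of _ "\<lambda>t. Y2 t + ?N (Y1 t)"]) (use h(1) d e in blast)
  qed
qed

lemma lc_conn_self: "lc_conn g br x x = - J x x"
  by (simp add: lc_conn_eq algebra_simps flip: scaleR_2)

lemma Jmap_zero_if_zero_on_vpart:
  assumes "\<forall>x\<in>V. J z x = 0"
  shows "J z b = 0"
proof -
  obtain bz where bz: "bz \<in> Z" "b - bz \<in> V" using center_vpart_decomp by blast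
  have "J z b = J z bz + J z (b - bz)" by simp
  also have "\<dots> = 0" using bz assms by (simp del: Jmap_diff_right)
  finally show ?thesis .
qed

end

locale nilpotent_geodesic =
  metric_two_step_nilpotent br g for br :: "'n::euclidean_space \<Rightarrow> 'n \<Rightarrow> 'n" and g +
  fixes z0 x0 :: 'n and c :: "real \<Rightarrow> 'n"
  assumes z0: "z0 \<in> Z" and x0: "x0 \<in> V" and geodesic: "geodesic_velocity g br c"
    and initial: "c 0 = z0 + x0"
begin

abbreviation jacobi_vanishing :: "real \<Rightarrow> (real \<Rightarrow> 'n) set" where
  "jacobi_vanishing t \<equiv> {Y. jacobi_field g br c Y \<and> Y 0 = 0 \<and> Y t = 0}"

lemma velocity_const:
  assumes "J z0 x0 = 0"
  shows "c t = z0 + x0"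
proof -
  have c': "(c has_vector_derivative J (c t) (c t)) (at t)" for t
    using geodesic unfolding geodesic_velocity_def lc_conn_self by simp
  have "g (c t) z = g z0 z" if z: "z \<in> Z" for t z
  proof -
    have "bounded_linear (\<lambda>x. g x z)"
      using bilinear_g linear_conv_bounded_linear unfolding bilinear_def by blast
    then have "((\<lambda>t. g (c t) z) has_vector_derivative g (J (c t) (c t)) z) (at t)" for t
      by (rule bounded_linear.has_vector_derivative[OF _ c'])
    moreover have "g (J (c t) (c t)) z = 0" for t using Jmap_in_vpart z unfolding mem_vpart_iff by blast
    ultimately have "((\<lambda>t. g (c t) z) has_vector_derivative 0) (at t)" for t by simp
    moreover have "((\<lambda>t. g z0 z) has_vector_derivative 0) (at t)" for t by simp
    moreover have "g (c 0) z = g z0 z" using initial x0 z unfolding mem_vpart_iff by simp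
    ultimately show ?thesis
      using eq_if_same_vector_derivative[of "\<lambda>t. g (c t) z" "\<lambda>t. 0" "\<lambda>t. g z0 z" 0 t] by blast
  qed
  then have "J (c t) b = J z0 b" for t b by (rule Jmap_cong_left)
  then have "solves_linear_ode (J z0) c" unfolding solves_linear_ode_def using c' by simp
  moreover have "solves_linear_ode (J z0) (\<lambda>t. z0 + x0)"
    unfolding solves_linear_ode_def using assms z0 by simp
  ultimately show ?thesis using solves_linear_ode_unique[OF linear_Jmap] initial by blast
qed


definition frequencies :: "real set" where
  "frequencies = {l. l > 0 \<and> (\<exists>x\<in>V. x \<noteq> 0 \<and> J z0 (J z0 x) = (- l\<^sup>2) *\<^sub>R x)}"

lemma frequencies_pos: "l \<in> frequencies \<Longrightarrow> l > 0"
  unfolding frequencies_def by auto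

lemma frequencies_empty_if_J_zero:
  assumes "\<forall>x\<in>V. J z0 x = 0"
  shows "frequencies = {}"
  using assms unfolding frequencies_def by auto

end

section \<open>Conjugate points when \<open>J\<^bsub>z0\<^esub> = 0\<close>\<close>

locale Jzero_geodesic =
  nilpotent_geodesic br g z0 x0 c for br :: "'n::euclidean_space \<Rightarrow> 'n \<Rightarrow> 'n" and g z0 x0 c +
  assumes J_z0_zero: "\<And>b. J z0 b = 0"
begin

abbreviation ad :: "'n \<Rightarrow> 'n" where "ad y \<equiv> br x0 y"
abbreviation K :: "'n \<Rightarrow> 'n" where "K y \<equiv> J y x0"
abbreviation A :: "'n \<Rightarrow> 'n" where "A y \<equiv> br x0 (J y x0)"

lemma velocity_eq: "c t = z0 + x0"
  using velocity_const J_z0_zero by blast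

lemma jacobi_field_iff:
  "jacobi_field g br c Y \<longleftrightarrow> (\<exists>Y1 Y2. \<forall>t. (Y has_vector_derivative Y1 t) (at t) \<and>
      (Y1 has_vector_derivative Y2 t) (at t) \<and> Y2 t + ad (Y1 t) - K (Y1 t) - K (ad (Y t)) = 0)"
proof -
  define c0 where "c0 = z0 + x0"
  have N: "lc_conn g br c0 y = (1/2) *\<^sub>R (ad y - K y)" for y
    unfolding c0_def using z0 x0 by (simp add: lc_conn_eq J_z0_zero)
  have R: "curv g br y c0 c0 = (1/4) *\<^sub>R A y - (3/4) *\<^sub>R K (ad y)" for y
  proof -
    have 1: "lc_conn g br c0 c0 = 0" unfolding N unfolding c0_def using z0 x0 by (simp add: J_z0_zero)
    have 2: "lc_conn g br y 0 = 0" by (simp add: lc_conn_eq)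
    have 3: "lc_conn g br y c0 = (1/2) *\<^sub>R (br y x0 - K y)"
      unfolding c0_def using z0 x0 by (simp add: lc_conn_eq J_z0_zero)
    have 4: "br y c0 = br y x0" unfolding c0_def using z0 by simp
    have 5: "lc_conn g br (br y x0) c0 = (- (1/2)) *\<^sub>R K (br y x0)"
      unfolding c0_def using z0 x0 by (simp add: lc_conn_eq J_z0_zero)
    show ?thesis unfolding curv_def 1 2 3 4 5 unfolding N
      by (simp add: br_antisym[of y x0] algebra_simps) (simp flip: scaleR_add_left)
  qed
  have eq: "Y2 + 2 *\<^sub>R lc_conn g br c0 Y1 + lc_conn g br c0 (lc_conn g br c0 Y0) + curv g br Y0 c0 c0 = 0
      \<longleftrightarrow> Y2 + ad Y1 - K Y1 - K (ad Y0) = 0" for Y0 Y1 Y2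
  proof -
    have "Y2 + 2 *\<^sub>R lc_conn g br c0 Y1 + lc_conn g br c0 (lc_conn g br c0 Y0) + curv g br Y0 c0 c0
        = Y2 + ad Y1 - K Y1 - K (ad Y0)"
      unfolding N R by (simp add: algebra_simps) (simp flip: scaleR_add_left)
    then show ?thesis by (rule arg_cong[where f = "\<lambda>u. u = 0"])
  qed
  have "\<And>t. c t = c0" unfolding c0_def by (rule velocity_eq)
  show ?thesis unfolding jacobi_field_const_iff[OF \<open>\<And>t. c t = c0\<close>] eq ..
qed

definition jacobi_cubic :: "'n \<Rightarrow> real \<Rightarrow> 'n" where
  "jacobi_cubic a t = t *\<^sub>R a + (t\<^sup>2 / 2) *\<^sub>R (K a - ad a) - (t ^ 3 / 6) *\<^sub>R A a"

lemma jacobi_cubic_derivative: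
  "(jacobi_cubic a has_vector_derivative a + t *\<^sub>R (K a - ad a) - (t\<^sup>2 / 2) *\<^sub>R A a) (at t)"
  unfolding jacobi_cubic_def
  by (auto intro!: derivative_eq_intros simp: field_simps power2_eq_square power3_eq_cube)

lemma jacobi_field_jacobi_cubic: "jacobi_field g br c (jacobi_cubic a)"
proof -
  have "((\<lambda>t. a + t *\<^sub>R (K a - ad a) - (t\<^sup>2 / 2) *\<^sub>R A a) has_vector_derivative
      (K a - ad a) - t *\<^sub>R A a) (at t)" for t
    by (auto intro!: derivative_eq_intros simp: field_simps power2_eq_square)
  then show ?thesis unfolding jacobi_field_iff
    using jacobi_cubic_derivative
    by (intro exI[of _ "\<lambda>t. a + t *\<^sub>R (K a - ad a) - (t\<^sup>2 / 2) *\<^sub>R A a"]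
        exI[of _ "\<lambda>t. (K a - ad a) - t *\<^sub>R A a"])
      (simp add: jacobi_cubic_def algebra_simps)
qed

lemma jacobi_cubic_0 [simp]: "jacobi_cubic a 0 = 0"
  unfolding jacobi_cubic_def by simp

lemma vector_derivative_jacobi_cubic_0 [simp]: "vector_derivative (jacobi_cubic a) (at 0) = a"
  using vector_derivative_at[OF jacobi_cubic_derivative[of a 0]] by simp

lemma jacobi_cubic_add: "jacobi_cubic (a + b) = (\<lambda>t. jacobi_cubic a t + jacobi_cubic b t)"
  unfolding jacobi_cubic_def by (rule ext) (simp add: algebra_simps)

lemma jacobi_cubic_scale: "jacobi_cubic (r *\<^sub>R a) = (\<lambda>t. r *\<^sub>R jacobi_cubic a t)"
  unfolding jacobi_cubic_def by (rule ext) (simp add: algebra_simps)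

lemma jacobi_cubic_zero: "jacobi_cubic 0 = (\<lambda>t. 0)"
  unfolding jacobi_cubic_def by (rule ext) simp

text \<open>Since \<open>K \<circ> K = 0\<close> and \<open>ad \<circ> ad = 0\<close>, the Jacobi equation integrates in two steps:
  \<open>Y' + ad Y\<close> solves \<open>u' = K u\<close>, hence is affine, and then so is \<open>ad Y\<close>.\<close>
lemma jacobi_field_first_integral:
  assumes Y: "\<And>t. (Y has_vector_derivative Y1 t) (at t)" "\<And>t. (Y1 has_vector_derivative Y2 t) (at t)"
    and jac: "\<And>t. Y2 t + ad (Y1 t) - K (Y1 t) - K (ad (Y t)) = 0" and Y0: "Y 0 = 0"
  shows "Y1 t + ad (Y t) = Y1 0 + t *\<^sub>R K (Y1 0)"
proof -
  define U where "U s = Y1 s + ad (Y s)" for s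
  have bounded: "bounded_linear ad" "bounded_linear K"
    using linear_br linear_Jmap_left linear_conv_bounded_linear by blast+
  have U': "(U has_vector_derivative K (U t)) (at t)" for t
  proof -
    have "(U has_vector_derivative Y2 t + ad (Y1 t)) (at t)"
      unfolding U_def by (intro has_vector_derivative_add Y(2) bounded_linear.has_vector_derivative[OF bounded(1) Y(1)])
    moreover have "Y2 t + ad (Y1 t) = K (U t)" using jac[of t] unfolding U_def
      by (simp add: algebra_simps eq_diff_eq)
    ultimately show ?thesis by simp
  qed
  have U0: "U 0 = Y1 0" unfolding U_def using Y0 by simp
  have "((\<lambda>s. K (U s)) has_vector_derivative 0) (at t)" for t
    using bounded_linear.has_vector_derivative[OF bounded(2) U'] by simp
  then have "K (U t) = K (Y1 0)" for t
    using eq_if_same_vector_derivative[of "\<lambda>s. K (U s)" "\<lambda>t. 0" "\<lambda>s. K (Y1 0)" 0 t] U0 by simp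
  then have "(U has_vector_derivative K (Y1 0)) (at t)" for t using U' by simp
  moreover have "((\<lambda>t. Y1 0 + t *\<^sub>R K (Y1 0)) has_vector_derivative K (Y1 0)) (at t)" for t
    by (auto intro!: derivative_eq_intros)
  ultimately show ?thesis
    using eq_if_same_vector_derivative[of U "\<lambda>t. K (Y1 0)" "\<lambda>t. Y1 0 + t *\<^sub>R K (Y1 0)" 0 t] U0
    unfolding U_def by simp
qed

lemma jacobi_field_eq_jacobi_cubic:
  assumes "jacobi_field g br c Y" "Y 0 = 0"
  shows "Y = jacobi_cubic (vector_derivative Y (at 0))"
proof -
  obtain Y1 Y2 where Y: "\<And>t. (Y has_vector_derivative Y1 t) (at t)"
    "\<And>t. (Y1 has_vector_derivative Y2 t) (at t)"
    and jac: "\<And>t. Y2 t + ad (Y1 t) - K (Y1 t) - K (ad (Y t)) = 0"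
    using assms(1) unfolding jacobi_field_iff by blast
  define a where "a = Y1 0"
  have "vector_derivative Y (at 0) = a" unfolding a_def using Y(1) by (rule vector_derivative_at)
  have first: "Y1 t + ad (Y t) = a + t *\<^sub>R K a" for t
    unfolding a_def by (rule jacobi_field_first_integral[OF Y jac assms(2)])
  have ad_Y: "ad (Y t) = t *\<^sub>R ad a + (t\<^sup>2 / 2) *\<^sub>R A a" for t
  proof -
    have "bounded_linear ad" using linear_br linear_conv_bounded_linear by blast
    moreover have "ad (Y1 t) = ad a + t *\<^sub>R A a" for t using arg_cong[OF first[of t], of ad] by simp
    ultimately have "((\<lambda>s. ad (Y s)) has_vector_derivative ad a + t *\<^sub>R A a) (at t)" for t
      using bounded_linear.has_vector_derivative[OF _ Y(1)] by metis
    moreover have "((\<lambda>t. t *\<^sub>R ad a + (t\<^sup>2 / 2) *\<^sub>R A a) has_vector_derivative ad a + t *\<^sub>R A a) (at t)" for t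
      by (auto intro!: derivative_eq_intros simp: power2_eq_square field_simps)
    ultimately show ?thesis
      using eq_if_same_vector_derivative[of "\<lambda>s. ad (Y s)" "\<lambda>t. ad a + t *\<^sub>R A a"
          "\<lambda>t. t *\<^sub>R ad a + (t\<^sup>2 / 2) *\<^sub>R A a" 0 t] assms(2)
      by simp
  qed
  have "Y1 t = a + t *\<^sub>R (K a - ad a) - (t\<^sup>2 / 2) *\<^sub>R A a" for t
    using first[of t] unfolding ad_Y by (simp add: algebra_simps eq_diff_eq)
  then have "Y t = jacobi_cubic a t" for t
    using eq_if_same_vector_derivative[of Y Y1 "jacobi_cubic a" 0 t] Y(1) jacobi_cubic_derivative assms(2)
    by simp
  then show ?thesis using \<open>vector_derivative Y (at 0) = a\<close> by auto
qed

context
  fixes t0 :: real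
  assumes t0: "t0 \<noteq> 0"
begin

definition A_eigenspace :: "'n set" where
  "A_eigenspace = {z \<in> Z. A z + (12 / t0\<^sup>2) *\<^sub>R z = 0}"

definition cubic_end :: "'n \<Rightarrow> 'n" where
  "cubic_end a = a + (t0 / 2) *\<^sub>R (K a - ad a) - (t0\<^sup>2 / 6) *\<^sub>R A a"

text \<open>This map sends the Jacobi fields vanishing at \<open>0\<close> and \<open>t0\<close> isomorphically onto
  \<open>A_eigenspace\<close>: for them \<open>Y'(0) + (t0/2) K Y'(0)\<close> is central and is an eigenvector of \<open>A\<close>
  for the eigenvalue \<open>-12/t0\<^sup>2\<close>.\<close>
definition central_datum :: "(real \<Rightarrow> 'n) \<Rightarrow> 'n" where
  "central_datum Y = vector_derivative Y (at 0) + (t0 / 2) *\<^sub>R K (vector_derivative Y (at 0))"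

lemma jacobi_cubic_t0: "jacobi_cubic a t0 = t0 *\<^sub>R cubic_end a"
  unfolding jacobi_cubic_def cubic_end_def by (simp add: algebra_simps power2_eq_square power3_eq_cube)

lemma jacobi_vanishing_iff: "Y \<in> jacobi_vanishing t0 \<longleftrightarrow> (\<exists>a. Y = jacobi_cubic a \<and> cubic_end a = 0)"
proof
  assume "Y \<in> jacobi_vanishing t0"
  then have "Y = jacobi_cubic (vector_derivative Y (at 0))" "Y t0 = 0"
    using jacobi_field_eq_jacobi_cubic by auto
  then show "\<exists>a. Y = jacobi_cubic a \<and> cubic_end a = 0" using jacobi_cubic_t0 t0 by (metis scaleR_eq_0_iff)
next
  assume "\<exists>a. Y = jacobi_cubic a \<and> cubic_end a = 0"
  then show "Y \<in> jacobi_vanishing t0" using jacobi_field_jacobi_cubic jacobi_cubic_t0 by auto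
qed

lemma central_datum_jacobi_cubic: "central_datum (jacobi_cubic a) = a + (t0 / 2) *\<^sub>R K a"
  unfolding central_datum_def by simp

lemma central_datum_in_A_eigenspace:
  assumes "cubic_end a = 0"
  shows "a + (t0 / 2) *\<^sub>R K a \<in> A_eigenspace"
proof -
  define z where "z = a + (t0 / 2) *\<^sub>R K a"
  have "cubic_end a = z - ((t0 / 2) *\<^sub>R ad a + (t0\<^sup>2 / 6) *\<^sub>R A a)"
    unfolding cubic_end_def z_def by (simp add: algebra_simps)
  then have z_eq: "z = (t0 / 2) *\<^sub>R ad a + (t0\<^sup>2 / 6) *\<^sub>R A a" using assms by simp
  have "ad (cubic_end a) = ad a + (t0 / 2) *\<^sub>R A a" unfolding cubic_end_def by (simp add: algebra_simps)
  then have "ad a = (- (t0 / 2)) *\<^sub>R A a" using assms by (simp add: eq_neg_iff_add_eq_0)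
  then have "z = ((t0 / 2) * (- (t0 / 2)) + t0\<^sup>2 / 6) *\<^sub>R A a" unfolding z_eq by (simp add: algebra_simps)
  also have "(t0 / 2) * (- (t0 / 2)) + t0\<^sup>2 / 6 = - (t0\<^sup>2 / 12)" by (simp add: power2_eq_square field_simps)
  finally have z: "z = (- (t0\<^sup>2 / 12)) *\<^sub>R A a" .
  have Az: "A z = A a" unfolding z_def by simp
  have "A z + (12 / t0\<^sup>2) *\<^sub>R z = A a + (12 / t0\<^sup>2) *\<^sub>R ((- (t0\<^sup>2 / 12)) *\<^sub>R A a)"
    by (subst Az, subst z, rule refl)
  also have "\<dots> = 0" using t0 by simp
  finally have "A z + (12 / t0\<^sup>2) *\<^sub>R z = 0" .
  moreover have "z \<in> Z" unfolding z_eq using subspace_center by (simp add: subspace_add subspace_scale)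
  ultimately show ?thesis unfolding A_eigenspace_def z_def by simp
qed

lemma A_eigenspace_preimage:
  assumes z: "z \<in> A_eigenspace"
  shows "cubic_end (z - (t0 / 2) *\<^sub>R K z) = 0"
    and "(z - (t0 / 2) *\<^sub>R K z) + (t0 / 2) *\<^sub>R K (z - (t0 / 2) *\<^sub>R K z) = z"
proof -
  have "z \<in> Z" and Az: "A z = (- (12 / t0\<^sup>2)) *\<^sub>R z" using z unfolding A_eigenspace_def
    by (auto simp: eq_neg_iff_add_eq_0)
  then have "cubic_end (z - (t0 / 2) *\<^sub>R K z)
      = (1 + ((t0 / 2) * (t0 / 2)) * (- (12 / t0\<^sup>2)) - (t0\<^sup>2 / 6) * (- (12 / t0\<^sup>2))) *\<^sub>R z"
    unfolding cubic_end_def by (simp add: Az algebra_simps)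
  also have "1 + ((t0 / 2) * (t0 / 2)) * (- (12 / t0\<^sup>2)) - (t0\<^sup>2 / 6) * (- (12 / t0\<^sup>2)) = 0"
    using t0 by (simp add: field_simps power2_eq_square)
  finally show "cubic_end (z - (t0 / 2) *\<^sub>R K z) = 0" by simp
  show "(z - (t0 / 2) *\<^sub>R K z) + (t0 / 2) *\<^sub>R K (z - (t0 / 2) *\<^sub>R K z) = z" by simp
qed

lemma central_datum_inj: "a + (t0 / 2) *\<^sub>R K a = b + (t0 / 2) *\<^sub>R K b \<Longrightarrow> a = b"
proof -
  assume e: "a + (t0 / 2) *\<^sub>R K a = b + (t0 / 2) *\<^sub>R K b"
  then have "K (a + (t0 / 2) *\<^sub>R K a) = K (b + (t0 / 2) *\<^sub>R K b)" by simp
  then have "K a = K b" by simp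
  then show "a = b" using e by simp
qed

lemma subspace_A_eigenspace: "subspace A_eigenspace"
  unfolding A_eigenspace_def subspace_def
proof (intro conjI ballI allI)
  show "0 \<in> {z \<in> Z. A z + (12 / t0\<^sup>2) *\<^sub>R z = 0}" using subspace_center by (simp add: subspace_0)
next
  fix x y assume "x \<in> {z \<in> Z. A z + (12 / t0\<^sup>2) *\<^sub>R z = 0}" "y \<in> {z \<in> Z. A z + (12 / t0\<^sup>2) *\<^sub>R z = 0}"
  moreover have "A (x + y) + (12 / t0\<^sup>2) *\<^sub>R (x + y) = (A x + (12 / t0\<^sup>2) *\<^sub>R x) + (A y + (12 / t0\<^sup>2) *\<^sub>R y)"
    by (simp add: algebra_simps)
  ultimately show "x + y \<in> {z \<in> Z. A z + (12 / t0\<^sup>2) *\<^sub>R z = 0}"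
    using subspace_center by (simp add: subspace_add)
next
  fix r x assume "x \<in> {z \<in> Z. A z + (12 / t0\<^sup>2) *\<^sub>R z = 0}"
  moreover have "A (r *\<^sub>R x) + (12 / t0\<^sup>2) *\<^sub>R (r *\<^sub>R x) = r *\<^sub>R (A x + (12 / t0\<^sup>2) *\<^sub>R x)"
    by (simp add: algebra_simps)
  ultimately show "r *\<^sub>R x \<in> {z \<in> Z. A z + (12 / t0\<^sup>2) *\<^sub>R z = 0}"
    using subspace_center by (simp add: subspace_scale)
qed

lemma central_datum_image: "central_datum ` jacobi_vanishing t0 = A_eigenspace"
proof
  show "central_datum ` jacobi_vanishing t0 \<subseteq> A_eigenspace"
    using jacobi_vanishing_iff central_datum_in_A_eigenspace central_datum_jacobi_cubic by auto
  show "A_eigenspace \<subseteq> central_datum ` jacobi_vanishing t0"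
  proof
    fix z assume z: "z \<in> A_eigenspace"
    have "jacobi_cubic (z - (t0 / 2) *\<^sub>R K z) \<in> jacobi_vanishing t0"
      using jacobi_vanishing_iff A_eigenspace_preimage(1)[OF z] by blast
    moreover have "central_datum (jacobi_cubic (z - (t0 / 2) *\<^sub>R K z)) = z"
      using central_datum_jacobi_cubic A_eigenspace_preimage(2)[OF z] by simp
    ultimately show "z \<in> central_datum ` jacobi_vanishing t0" by force
  qed
qed

lemma inj_on_central_datum: "inj_on central_datum (jacobi_vanishing t0)"
proof (rule inj_onI)
  fix Y Y' assume "Y \<in> jacobi_vanishing t0" "Y' \<in> jacobi_vanishing t0" "central_datum Y = central_datum Y'"
  then obtain a b where "Y = jacobi_cubic a" "Y' = jacobi_cubic b"
    "central_datum (jacobi_cubic a) = central_datum (jacobi_cubic b)"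
    using jacobi_vanishing_iff by auto
  then show "Y = Y'" using central_datum_inj unfolding central_datum_jacobi_cubic by blast
qed

lemma dim_jacobi_vanishing: "real_fun.dim (jacobi_vanishing t0) = dim A_eigenspace"
proof (rule real_fun_dim_eq_dim[OF subspace_A_eigenspace central_datum_image inj_on_central_datum])
  show "(\<lambda>t. 0) \<in> jacobi_vanishing t0"
    unfolding jacobi_vanishing_iff by (intro exI[of _ 0]) (simp add: jacobi_cubic_zero cubic_end_def)
next
  fix Y Z assume "Y \<in> jacobi_vanishing t0" "Z \<in> jacobi_vanishing t0"
  then obtain a b where ab: "Y = jacobi_cubic a" "cubic_end a = 0" "Z = jacobi_cubic b" "cubic_end b = 0"
    using jacobi_vanishing_iff by auto
  have "cubic_end (a + b) = cubic_end a + cubic_end b" unfolding cubic_end_def by (simp add: algebra_simps)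
  then show "(\<lambda>t. Y t + Z t) \<in> jacobi_vanishing t0"
    unfolding jacobi_vanishing_iff ab by (intro exI[of _ "a + b"]) (simp add: ab jacobi_cubic_add)
  show "central_datum (\<lambda>t. Y t + Z t) = central_datum Y + central_datum Z"
    unfolding ab jacobi_cubic_add[symmetric] central_datum_jacobi_cubic by (simp add: algebra_simps)
next
  fix Y r assume "Y \<in> jacobi_vanishing t0"
  then obtain a where a: "Y = jacobi_cubic a" "cubic_end a = 0" using jacobi_vanishing_iff by auto
  have "cubic_end (r *\<^sub>R a) = r *\<^sub>R cubic_end a" unfolding cubic_end_def by (simp add: algebra_simps)
  then show "(\<lambda>t. r *\<^sub>R Y t) \<in> jacobi_vanishing t0"
    unfolding jacobi_vanishing_iff a by (intro exI[of _ "r *\<^sub>R a"]) (simp add: a jacobi_cubic_scale)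
  show "central_datum (\<lambda>t. r *\<^sub>R Y t) = r *\<^sub>R central_datum Y"
    unfolding a jacobi_cubic_scale[symmetric] central_datum_jacobi_cubic by (simp add: algebra_simps)
qed

lemma conjugate_at_iff_A_eigenspace: "conjugate_at g br c t0 \<longleftrightarrow> (\<exists>z\<in>A_eigenspace. z \<noteq> 0)"
proof
  assume "conjugate_at g br c t0"
  then obtain Y where Y: "Y \<in> jacobi_vanishing t0" "Y \<noteq> (\<lambda>_. 0)" unfolding conjugate_at_def by blast
  then obtain a where a: "Y = jacobi_cubic a" "cubic_end a = 0" using jacobi_vanishing_iff by auto
  have "a \<noteq> 0" using a Y jacobi_cubic_zero by auto
  then have "a + (t0 / 2) *\<^sub>R K a \<noteq> 0" using central_datum_inj[of a 0] by auto
  then show "\<exists>z\<in>A_eigenspace. z \<noteq> 0" using central_datum_in_A_eigenspace[OF a(2)] by blast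
next
  assume "\<exists>z\<in>A_eigenspace. z \<noteq> 0"
  then obtain z where z: "z \<in> A_eigenspace" "z \<noteq> 0" by blast
  define a where "a = z - (t0 / 2) *\<^sub>R K z"
  have "jacobi_cubic a \<in> jacobi_vanishing t0"
    using jacobi_vanishing_iff A_eigenspace_preimage(1)[OF z(1)] a_def by blast
  moreover have "jacobi_cubic a \<noteq> (\<lambda>_. 0)"
  proof
    assume "jacobi_cubic a = (\<lambda>_. 0)"
    then have "central_datum (jacobi_cubic a) = central_datum (jacobi_cubic 0)" using jacobi_cubic_zero by simp
    then show False using central_datum_jacobi_cubic A_eigenspace_preimage(2)[OF z(1)] a_def z(2) by simp
  qed
  ultimately show "conjugate_at g br c t0" unfolding conjugate_at_def using t0 by blast
qed

end

theorem conjugate_at_iff: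
  assumes "t \<noteq> 0"
  shows "conjugate_at g br c t \<longleftrightarrow> (\<exists>z\<in>Z. z \<noteq> 0 \<and> A z = (- 12 / t\<^sup>2) *\<^sub>R z)"
proof -
  have "A z = (- 12 / t\<^sup>2) *\<^sub>R z \<longleftrightarrow> A z + (12 / t\<^sup>2) *\<^sub>R z = 0" for z
    by (auto simp: eq_neg_iff_add_eq_0)
  then show ?thesis
    unfolding conjugate_at_iff_A_eigenspace[OF assms] A_eigenspace_def[OF assms] by auto
qed

theorem mult_cp_eq:
  assumes "t \<noteq> 0"
  shows "mult_cp g br c t = dim {z\<in>Z. A z + (12 / t\<^sup>2) *\<^sub>R z = 0}"
  using dim_jacobi_vanishing[OF assms] unfolding mult_cp_def A_eigenspace_def[OF assms] .

end

section \<open>Conjugate points of central geodesics\<close>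

lemma times_period_eq_iff:
  fixes h l :: real and n m :: int
  assumes "l > 0" "n \<noteq> 0"
  shows "h * (2 * pi / l * of_int n) = 2 * pi * of_int m \<longleftrightarrow> h = of_int m * (l / of_int n)"
proof -
  have "h * (2 * pi / l * of_int n) = 2 * pi * of_int m \<longleftrightarrow> h * of_int n = of_int m * l"
    using assms by (auto simp: field_simps)
  also have "\<dots> \<longleftrightarrow> h = of_int m * (l / of_int n)"
    using assms by (auto simp: field_simps)
  finally show ?thesis .
qed

locale central_geodesic =
  nilpotent_geodesic br g z0 x0 c for br :: "'n::euclidean_space \<Rightarrow> 'n \<Rightarrow> 'n" and g z0 x0 c +
  assumes x0_zero: "x0 = 0"
begin

lemma velocity_eq: "c t = z0"
  using velocity_const[of t] x0_zero by simp

lemma linear_J_z0: "linear (J z0)"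
  by (rule linear_Jmap)

lemma jacobi_field_iff:
  "jacobi_field g br c Y \<longleftrightarrow>
     (\<exists>Y1. (\<forall>t. (Y has_vector_derivative Y1 t) (at t)) \<and> solves_linear_ode (J z0) Y1)"
proof -
  have N: "lc_conn g br z0 y = (- (1/2)) *\<^sub>R J z0 y" for y using z0 by (simp add: lc_conn_eq)
  have R: "curv g br y z0 z0 = (- (1/4)) *\<^sub>R J z0 (J z0 y)" for y
  proof -
    have 1: "lc_conn g br z0 z0 = 0" using N[of z0] z0 by simp
    have 2: "lc_conn g br y 0 = 0" by (simp add: lc_conn_eq)
    have 3: "lc_conn g br y z0 = (- (1/2)) *\<^sub>R J z0 y" using z0 by (simp add: lc_conn_eq)
    have 4: "lc_conn g br 0 z0 = 0" by (simp add: lc_conn_eq)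
    show ?thesis unfolding curv_def 1 2 3 using z0 by (simp add: N 4)
  qed
  have eq: "Y2 + 2 *\<^sub>R lc_conn g br z0 Y1 + lc_conn g br z0 (lc_conn g br z0 Y0) + curv g br Y0 z0 z0 = 0
      \<longleftrightarrow> Y2 = J z0 Y1" for Y0 Y1 Y2
    by (simp add: N R)
  show ?thesis unfolding jacobi_field_const_iff[OF velocity_eq] eq solves_linear_ode_def
  proof
    assume "\<exists>Y1 Y2. \<forall>t. (Y has_vector_derivative Y1 t) (at t) \<and> (Y1 has_vector_derivative Y2 t) (at t)
      \<and> Y2 t = J z0 (Y1 t)"
    then obtain Y1 Y2 where "\<forall>t. (Y has_vector_derivative Y1 t) (at t) \<and>
      (Y1 has_vector_derivative Y2 t) (at t) \<and> Y2 t = J z0 (Y1 t)" by blast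
    then show "\<exists>Y1. (\<forall>t. (Y has_vector_derivative Y1 t) (at t)) \<and>
      (\<forall>t. (Y1 has_vector_derivative J z0 (Y1 t)) (at t))"
      by (intro exI[of _ Y1]) metis
  next
    assume "\<exists>Y1. (\<forall>t. (Y has_vector_derivative Y1 t) (at t)) \<and>
      (\<forall>t. (Y1 has_vector_derivative J z0 (Y1 t)) (at t))"
    then obtain Y1 where "(\<forall>t. (Y has_vector_derivative Y1 t) (at t)) \<and>
      (\<forall>t. (Y1 has_vector_derivative J z0 (Y1 t)) (at t))" by blast
    then show "\<exists>Y1 Y2. \<forall>t. (Y has_vector_derivative Y1 t) (at t) \<and> (Y1 has_vector_derivative Y2 t) (at t)
      \<and> Y2 t = J z0 (Y1 t)"
      by (intro exI[of _ Y1] exI[of _ "\<lambda>t. J z0 (Y1 t)"]) auto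
  qed
qed

lemma jacobi_fieldE:
  assumes "jacobi_field g br c Y"
  obtains Y1 where "\<And>t. (Y has_vector_derivative Y1 t) (at t)" "solves_linear_ode (J z0) Y1"
    "Y1 0 = vector_derivative Y (at 0)"
  using assms unfolding jacobi_field_iff by (metis vector_derivative_at)

lemma jacobi_field_unique:
  assumes "jacobi_field g br c Y" "jacobi_field g br c Y'" "Y 0 = Y' 0"
    "vector_derivative Y (at 0) = vector_derivative Y' (at 0)"
  shows "Y = Y'"
proof -
  obtain Y1 where Y1: "\<And>t. (Y has_vector_derivative Y1 t) (at t)" "solves_linear_ode (J z0) Y1"
    "Y1 0 = vector_derivative Y (at 0)"
    using jacobi_fieldE[OF assms(1)] by blast
  obtain Y1' where Y1': "\<And>t. (Y' has_vector_derivative Y1' t) (at t)" "solves_linear_ode (J z0) Y1'"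
    "Y1' 0 = vector_derivative Y' (at 0)"
    using jacobi_fieldE[OF assms(2)] by blast
  have "Y1 t = Y1' t" for t
    using solves_linear_ode_unique[OF linear_J_z0 Y1(2) Y1'(2), of 0 t] Y1(3) Y1'(3) assms(4) by simp
  then have "Y t = Y' t" for t
    using eq_if_same_vector_derivative[of Y Y1 Y' 0 t] Y1(1) Y1'(1) assms(3) by simp
  then show ?thesis by auto
qed

lemma jacobi_field_add:
  assumes "jacobi_field g br c Y" "jacobi_field g br c Y'"
  shows "jacobi_field g br c (\<lambda>t. Y t + Y' t)"
    and "vector_derivative (\<lambda>t. Y t + Y' t) (at 0) = vector_derivative Y (at 0) + vector_derivative Y' (at 0)"
proof -
  obtain Y1 where Y1: "\<And>t. (Y has_vector_derivative Y1 t) (at t)" "solves_linear_ode (J z0) Y1"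
    "Y1 0 = vector_derivative Y (at 0)"
    using jacobi_fieldE[OF assms(1)] by blast
  obtain Y1' where Y1': "\<And>t. (Y' has_vector_derivative Y1' t) (at t)" "solves_linear_ode (J z0) Y1'"
    "Y1' 0 = vector_derivative Y' (at 0)"
    using jacobi_fieldE[OF assms(2)] by blast
  have d: "((\<lambda>t. Y t + Y' t) has_vector_derivative Y1 t + Y1' t) (at t)" for t
    by (intro has_vector_derivative_add Y1(1) Y1'(1))
  show "jacobi_field g br c (\<lambda>t. Y t + Y' t)" unfolding jacobi_field_iff
    using d solves_linear_ode_add[OF linear_J_z0 Y1(2) Y1'(2)] by (intro exI[of _ "\<lambda>t. Y1 t + Y1' t"]) blast
  show "vector_derivative (\<lambda>t. Y t + Y' t) (at 0) = vector_derivative Y (at 0) + vector_derivative Y' (at 0)"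
    using vector_derivative_at[OF d[of 0]] Y1(3) Y1'(3) by simp
qed

lemma jacobi_field_scale:
  assumes "jacobi_field g br c Y"
  shows "jacobi_field g br c (\<lambda>t. r *\<^sub>R Y t)"
    and "vector_derivative (\<lambda>t. r *\<^sub>R Y t) (at 0) = r *\<^sub>R vector_derivative Y (at 0)"
proof -
  obtain Y1 where Y1: "\<And>t. (Y has_vector_derivative Y1 t) (at t)" "solves_linear_ode (J z0) Y1"
    "Y1 0 = vector_derivative Y (at 0)"
    using jacobi_fieldE[OF assms(1)] by blast
  have d: "((\<lambda>t. r *\<^sub>R Y t) has_vector_derivative r *\<^sub>R Y1 t) (at t)" for t
    by (rule bounded_linear.has_vector_derivative[OF bounded_linear_scaleR_right Y1(1)])
  show "jacobi_field g br c (\<lambda>t. r *\<^sub>R Y t)" unfolding jacobi_field_iff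
    using d solves_linear_ode_scale[OF linear_J_z0 Y1(2)] by (intro exI[of _ "\<lambda>t. r *\<^sub>R Y1 t"]) blast
  show "vector_derivative (\<lambda>t. r *\<^sub>R Y t) (at 0) = r *\<^sub>R vector_derivative Y (at 0)"
    using vector_derivative_at[OF d[of 0]] Y1(3) by simp
qed

lemma jacobi_field_linear:
  assumes "J z0 a = 0"
  shows "jacobi_field g br c (\<lambda>t. t *\<^sub>R a)" and "vector_derivative (\<lambda>t. t *\<^sub>R a) (at 0) = a"
proof -
  have d: "((\<lambda>t. t *\<^sub>R a) has_vector_derivative a) (at t)" for t
    by (auto intro!: derivative_eq_intros)
  have "solves_linear_ode (J z0) (\<lambda>t. a)" unfolding solves_linear_ode_def using assms by simp
  then show "jacobi_field g br c (\<lambda>t. t *\<^sub>R a)"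
    unfolding jacobi_field_iff using d by (intro exI[of _ "\<lambda>t. a"]) blast
  show "vector_derivative (\<lambda>t. t *\<^sub>R a) (at 0) = a" using vector_derivative_at[OF d] .
qed

lemma jacobi_field_zero:
  "jacobi_field g br c (\<lambda>t. 0)" "vector_derivative (\<lambda>t. 0::'n) (at 0) = 0"
  using jacobi_field_linear[of 0] by simp_all

definition rotation_field :: "real \<Rightarrow> 'n \<Rightarrow> real \<Rightarrow> 'n" where
  "rotation_field h x t = (sin (h * t) / h) *\<^sub>R x + ((1 - cos (h * t)) / h\<^sup>2) *\<^sub>R J z0 x"

lemma rotation_field:
  assumes h: "h > 0" and x: "J z0 (J z0 x) = (- h\<^sup>2) *\<^sub>R x"
  shows "jacobi_field g br c (rotation_field h x)" "rotation_field h x 0 = 0"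
    "vector_derivative (rotation_field h x) (at 0) = x"
    "\<exists>m::int. h * t = 2 * pi * m \<Longrightarrow> rotation_field h x t = 0"
proof -
  have d: "(rotation_field h x has_vector_derivative (cos (h * t) *\<^sub>R x + (sin (h * t) / h) *\<^sub>R J z0 x)) (at t)"
    for t
    unfolding rotation_field_def using h
    by (auto intro!: derivative_eq_intros simp: field_simps power2_eq_square)
  show "jacobi_field g br c (rotation_field h x)"
    unfolding jacobi_field_iff using d solves_linear_ode_rotation[OF linear_J_z0 x] h by force
  show "rotation_field h x 0 = 0" unfolding rotation_field_def by simp
  show "vector_derivative (rotation_field h x) (at 0) = x" using vector_derivative_at[OF d[of 0]] by simp
  assume "\<exists>m::int. h * t = 2 * pi * m"
  then obtain m :: int where m: "h * t = 2 * pi * m" by blast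
  have "sin (h * t) = 0" "cos (h * t) = 1" unfolding m by (simp_all add: sin_eq_0 cos_one_2pi_int)
  then show "rotation_field h x t = 0" unfolding rotation_field_def by simp
qed

definition J2_eigenspace :: "real \<Rightarrow> 'n set" where
  "J2_eigenspace h = {x. J z0 (J z0 x) = (- h\<^sup>2) *\<^sub>R x}"

lemma linear_J2: "linear (\<lambda>x. J z0 (J z0 x))"
  using linear_compose[OF linear_J_z0 linear_J_z0] by (simp add: o_def)

lemma J2_eigenspace_subset_vpart:
  assumes "h \<noteq> 0" "x \<in> J2_eigenspace h"
  shows "x \<in> V"
proof -
  have "x = J z0 ((- (1 / h\<^sup>2)) *\<^sub>R J z0 x)" using assms unfolding J2_eigenspace_def by simp
  then show ?thesis by (metis Jmap_in_vpart)
qed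

lemma vpart_J2_eigenspace_eq:
  assumes "h > 0"
  shows "{x\<in>V. J z0 (J z0 x) + h\<^sup>2 *\<^sub>R x = 0} = J2_eigenspace h"
proof -
  have "J z0 (J z0 x) + h\<^sup>2 *\<^sub>R x = 0 \<longleftrightarrow> x \<in> J2_eigenspace h" for x
    unfolding J2_eigenspace_def by (auto simp: eq_neg_iff_add_eq_0)
  then show ?thesis using J2_eigenspace_subset_vpart[of h] assms by auto
qed

lemma dim_span_J2_eigenspaces:
  assumes "finite H" "H \<subseteq> {h. h > 0}"
  shows "dim (span (\<Union>h\<in>H. J2_eigenspace h)) = (\<Sum>h\<in>H. dim (J2_eigenspace h))"
proof -
  have inj: "inj_on (\<lambda>h::real. - h\<^sup>2) H"
  proof (rule inj_onI)
    fix x y assume "x \<in> H" "y \<in> H" "- x\<^sup>2 = - y\<^sup>2"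
    then have "x \<ge> 0" "y \<ge> 0" "x\<^sup>2 = y\<^sup>2" using assms(2) by auto
    then show "x = y" using power2_eq_iff_nonneg by blast
  qed
  have "dim (span (\<Union>l\<in>(\<lambda>h. - h\<^sup>2) ` H. {x. J z0 (J z0 x) = l *\<^sub>R x}))
      = (\<Sum>l\<in>(\<lambda>h. - h\<^sup>2) ` H. dim {x. J z0 (J z0 x) = l *\<^sub>R x})"
    by (rule dim_span_eigenspaces[OF linear_J2 finite_imageI[OF assms(1)]])
  also have "\<dots> = (\<Sum>h\<in>H. dim (J2_eigenspace h))"
    unfolding J2_eigenspace_def by (simp only: sum.reindex[OF inj] o_def)
  finally show ?thesis unfolding J2_eigenspace_def by (simp add: image_image)
qed

lemma finite_frequencies: "finite frequencies"
proof (rule ccontr)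
  assume "infinite frequencies"
  then obtain H where H: "H \<subseteq> frequencies" "finite H" "card H = Suc DIM('n)"
    using infinite_arbitrarily_large by blast
  have "dim (J2_eigenspace h) \<ge> 1" if h: "h \<in> frequencies" for h
  proof -
    obtain x where "x \<in> J2_eigenspace h" "x \<noteq> 0"
      using h unfolding frequencies_def J2_eigenspace_def by auto
    then have "\<not> J2_eigenspace h \<subseteq> {0}" by auto
    then have "dim (J2_eigenspace h) \<noteq> 0" by (simp add: dim_eq_0)
    then show ?thesis by linarith
  qed
  then have "card H \<le> (\<Sum>h\<in>H. dim (J2_eigenspace h))"
    using H(1) sum_mono[of H "\<lambda>_. 1 :: nat" "\<lambda>h. dim (J2_eigenspace h)"] by (simp add: subset_iff)
  also have "\<dots> = dim (span (\<Union>h\<in>H. J2_eigenspace h))"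
    using dim_span_J2_eigenspaces[OF H(2)] H(1) frequencies_pos by (metis mem_Collect_eq subset_eq)
  also have "\<dots> \<le> DIM('n)" by (rule dim_subset_UNIV)
  finally show False using H(3) by simp
qed

context
  fixes t0 :: real
  assumes t0: "t0 \<noteq> 0"
begin

definition resonant_frequencies :: "real set" where
  "resonant_frequencies = {h\<in>frequencies. \<exists>m::int. h * t0 = 2 * pi * m}"

definition resonant_space :: "'n set" where
  "resonant_space = span (\<Union>h\<in>resonant_frequencies. J2_eigenspace h)"

lemma finite_resonant_frequencies: "finite resonant_frequencies"
  using finite_frequencies unfolding resonant_frequencies_def by simp

lemma resonant_space_subset_initial_velocities:
  assumes "u \<in> resonant_space"
  shows "\<exists>Y\<in>jacobi_vanishing t0. vector_derivative Y (at 0) = u"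
proof -
  have "subspace {u. \<exists>Y\<in>jacobi_vanishing t0. vector_derivative Y (at 0) = u}"
    unfolding subspace_def
  proof (intro conjI ballI allI)
    show "0 \<in> {u. \<exists>Y\<in>jacobi_vanishing t0. vector_derivative Y (at 0) = u}"
      using jacobi_field_zero by force
  next
    fix x y assume "x \<in> {u. \<exists>Y\<in>jacobi_vanishing t0. vector_derivative Y (at 0) = u}"
      "y \<in> {u. \<exists>Y\<in>jacobi_vanishing t0. vector_derivative Y (at 0) = u}"
    then obtain Y Y' where "Y \<in> jacobi_vanishing t0" "Y' \<in> jacobi_vanishing t0"
      "vector_derivative Y (at 0) = x" "vector_derivative Y' (at 0) = y" by blast
    then show "x + y \<in> {u. \<exists>Y\<in>jacobi_vanishing t0. vector_derivative Y (at 0) = u}"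
      using jacobi_field_add by (intro CollectI bexI[of _ "\<lambda>t. Y t + Y' t"]) auto
  next
    fix r x assume "x \<in> {u. \<exists>Y\<in>jacobi_vanishing t0. vector_derivative Y (at 0) = u}"
    then obtain Y where "Y \<in> jacobi_vanishing t0" "vector_derivative Y (at 0) = x" by blast
    then show "r *\<^sub>R x \<in> {u. \<exists>Y\<in>jacobi_vanishing t0. vector_derivative Y (at 0) = u}"
      using jacobi_field_scale by (intro CollectI bexI[of _ "\<lambda>t. r *\<^sub>R Y t"]) auto
  qed
  moreover have "\<exists>Y\<in>jacobi_vanishing t0. vector_derivative Y (at 0) = x"
    if x: "x \<in> (\<Union>h\<in>resonant_frequencies. J2_eigenspace h)" for x
  proof -
    obtain h where h: "h \<in> resonant_frequencies" "x \<in> J2_eigenspace h" using x by blast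
    have "h > 0" "\<exists>m::int. h * t0 = 2 * pi * m"
      using h(1) frequencies_pos unfolding resonant_frequencies_def by auto
    moreover have "J z0 (J z0 x) = (- h\<^sup>2) *\<^sub>R x" using h(2) unfolding J2_eigenspace_def by simp
    ultimately show ?thesis using rotation_field by (intro bexI[of _ "rotation_field h x"]) auto
  qed
  ultimately show ?thesis
    using span_induct[of u "\<Union>h\<in>resonant_frequencies. J2_eigenspace h"
        "\<lambda>u. \<exists>Y\<in>jacobi_vanishing t0. vector_derivative Y (at 0) = u"] assms
    unfolding resonant_space_def by blast
qed

text \<open>\<open>Y' - J\<^bsub>z0\<^esub> Y\<close> is constant, so \<open>Y(0) = Y(t0) = 0\<close> makes \<open>Y'\<close> periodic.\<close>
lemma jacobi_velocity_periodic:
  assumes Y: "\<And>t. (Y has_vector_derivative Y1 t) (at t)" "solves_linear_ode (J z0) Y1"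
    and vanish: "Y 0 = 0" "Y t0 = 0"
  shows "Y1 \<bar>t0\<bar> = Y1 0"
proof -
  have "bounded_linear (J z0)" using linear_J_z0 linear_conv_bounded_linear by blast
  then have "((\<lambda>t. Y1 t - J z0 (Y t)) has_vector_derivative J z0 (Y1 t) - J z0 (Y1 t)) (at t)" for t
    using Y(2) unfolding solves_linear_ode_def
    by (intro has_vector_derivative_diff bounded_linear.has_vector_derivative[OF _ Y(1)]) auto
  then have "Y1 t0 - J z0 (Y t0) = Y1 0 - J z0 (Y 0)"
    using eq_if_same_vector_derivative[of "\<lambda>t. Y1 t - J z0 (Y t)" "\<lambda>t. 0" "\<lambda>t. Y1 0 - J z0 (Y 0)" 0 t0]
    by simp
  then have per: "Y1 t0 = Y1 0" using vanish by simp
  show ?thesis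
  proof (cases "t0 > 0")
    case True then show ?thesis using per by simp
  next
    case False
    have "Y1 (s + t0) = Y1 s" for s
      using solves_linear_ode_unique[OF linear_J_z0 solves_linear_ode_shift[OF Y(2), of t0] Y(2), of 0 s] per
      by simp
    from this[of "- t0"] show ?thesis using False by simp
  qed
qed

lemma resonant_eigenvectors_subset:
  "{y. \<exists>\<mu>>0. J z0 (J z0 y) = (- \<mu>\<^sup>2) *\<^sub>R y \<and> (\<exists>k::int. \<mu> * \<bar>t0\<bar> = 2 * pi * k)} \<subseteq> resonant_space"
proof
  fix y assume "y \<in> {y. \<exists>\<mu>>0. J z0 (J z0 y) = (- \<mu>\<^sup>2) *\<^sub>R y \<and> (\<exists>k::int. \<mu> * \<bar>t0\<bar> = 2 * pi * k)}"
  then obtain \<mu> k where \<mu>: "\<mu> > 0" "J z0 (J z0 y) = (- \<mu>\<^sup>2) *\<^sub>R y" "\<mu> * \<bar>t0\<bar> = 2 * pi * of_int k"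
    by blast
  show "y \<in> resonant_space"
  proof (cases "y = 0")
    case True then show ?thesis unfolding resonant_space_def by (simp add: span_zero)
  next
    case False
    have y: "y \<in> J2_eigenspace \<mu>" using \<mu> unfolding J2_eigenspace_def by simp
    then have "\<mu> \<in> frequencies"
      unfolding frequencies_def using J2_eigenspace_subset_vpart[OF _ y] \<mu> False by auto
    moreover have "\<exists>m::int. \<mu> * t0 = 2 * pi * m"
    proof (cases "t0 > 0")
      case True then show ?thesis using \<mu>(3) by auto
    next
      case False
      then have "\<mu> * t0 = 2 * pi * of_int (- k)" using \<mu>(3) by simp
      then show ?thesis by blast
    qed
    ultimately have "\<mu> \<in> resonant_frequencies" unfolding resonant_frequencies_def by simp
    then show ?thesis unfolding resonant_space_def using y by (auto intro: span_base)
  qed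
qed

text \<open>By the periodic decomposition \<open>Y'(0) = a0 + u\<close> with \<open>J\<^bsub>z0\<^esub> a0 = 0\<close> and \<open>u\<close> resonant;
  comparing \<open>Y\<close> with \<open>t a0\<close> plus the field realising \<open>u\<close> forces \<open>a0 = 0\<close>.\<close>
lemma initial_velocity_in_resonant_space:
  assumes Y: "Y \<in> jacobi_vanishing t0"
  shows "vector_derivative Y (at 0) \<in> resonant_space"
proof -
  have jY: "jacobi_field g br c Y" and vanish: "Y 0 = 0" "Y t0 = 0" using Y by auto
  obtain Y1 where Y1: "\<And>t. (Y has_vector_derivative Y1 t) (at t)" "solves_linear_ode (J z0) Y1"
    "Y1 0 = vector_derivative Y (at 0)"
    using jacobi_fieldE[OF jY] by blast
  interpret periodic_linear_ode "J z0" Y1 "\<bar>t0\<bar>"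
    using linear_J_z0 Y1(2) t0 jacobi_velocity_periodic[OF Y1(1,2) vanish] by unfold_locales auto
  obtain a0 u where au: "Y1 0 = a0 + u" "a0 \<in> span {y. J z0 y = 0}"
    "u \<in> span {y. \<exists>\<mu>>0. J z0 (J z0 y) = (- \<mu>\<^sup>2) *\<^sub>R y \<and> (\<exists>k::int. \<mu> * \<bar>t0\<bar> = 2 * pi * k)}"
    using initial_value_in_resonant_span unfolding resonant_span_def span_Un by blast
  have "subspace {y. J z0 y = 0}"
    unfolding subspace_def by (simp add: linear_add[OF linear_J_z0] linear_scale[OF linear_J_z0])
  then have a0: "J z0 a0 = 0" using au(2) by (metis mem_Collect_eq span_eq_iff)
  have "subspace resonant_space" unfolding resonant_space_def by simp
  with resonant_eigenvectors_subset have u: "u \<in> resonant_space"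
    using au(3) span_minimal by blast
  obtain Yu where Yu: "Yu \<in> jacobi_vanishing t0" "vector_derivative Yu (at 0) = u"
    using resonant_space_subset_initial_velocities[OF u] by blast
  have "(\<lambda>t. Yu t + t *\<^sub>R a0) = Y"
  proof (rule jacobi_field_unique)
    show "jacobi_field g br c (\<lambda>t. Yu t + t *\<^sub>R a0)"
      using Yu(1) jacobi_field_add(1) jacobi_field_linear(1)[OF a0] by blast
    show "vector_derivative (\<lambda>t. Yu t + t *\<^sub>R a0) (at 0) = vector_derivative Y (at 0)"
      using Yu jacobi_field_add(2) jacobi_field_linear[OF a0] au(1) Y1(3) by (simp add: add.commute)
  qed (use jY Yu(1) vanish in simp_all)
  then have "Yu t0 + t0 *\<^sub>R a0 = Y t0" by (rule fun_cong)
  then have "t0 *\<^sub>R a0 = 0" using Yu(1) vanish by simp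
  then have "a0 = 0" using t0 by simp
  then show ?thesis using au(1) u Y1(3) by simp
qed

lemma initial_velocity_image:
  "(\<lambda>Y. vector_derivative Y (at 0)) ` jacobi_vanishing t0 = resonant_space"
  using initial_velocity_in_resonant_space resonant_space_subset_initial_velocities by force

lemma inj_on_initial_velocity: "inj_on (\<lambda>Y. vector_derivative Y (at 0)) (jacobi_vanishing t0)"
  by (rule inj_onI) (use jacobi_field_unique in auto)

lemma dim_jacobi_vanishing: "real_fun.dim (jacobi_vanishing t0) = dim resonant_space"
proof (rule real_fun_dim_eq_dim[OF _ initial_velocity_image inj_on_initial_velocity])
  show "subspace resonant_space" unfolding resonant_space_def by simp
  show "(\<lambda>t. 0) \<in> jacobi_vanishing t0" using jacobi_field_zero by simp
  fix Y Z assume "Y \<in> jacobi_vanishing t0" "Z \<in> jacobi_vanishing t0"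
  then show "(\<lambda>t. Y t + Z t) \<in> jacobi_vanishing t0"
    "vector_derivative (\<lambda>t. Y t + Z t) (at 0) = vector_derivative Y (at 0) + vector_derivative Z (at 0)"
    using jacobi_field_add by auto
next
  fix Y r assume "Y \<in> jacobi_vanishing t0"
  then show "(\<lambda>t. r *\<^sub>R Y t) \<in> jacobi_vanishing t0"
    "vector_derivative (\<lambda>t. r *\<^sub>R Y t) (at 0) = r *\<^sub>R vector_derivative Y (at 0)"
    using jacobi_field_scale by auto
qed

lemma dim_resonant_space:
  "dim resonant_space = (\<Sum>h\<in>resonant_frequencies. dim (J2_eigenspace h))"
  unfolding resonant_space_def
  by (rule dim_span_J2_eigenspaces[OF finite_resonant_frequencies])
    (use frequencies_pos in \<open>auto simp: resonant_frequencies_def\<close>)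

lemma resonant_space_subset_vpart: "resonant_space \<subseteq> V"
proof -
  have "J2_eigenspace h \<subseteq> V" if "h \<in> resonant_frequencies" for h
    using that J2_eigenspace_subset_vpart[of h] frequencies_pos[of h]
    unfolding resonant_frequencies_def by auto
  then have "(\<Union>h\<in>resonant_frequencies. J2_eigenspace h) \<subseteq> V" by (rule UN_least)
  then show ?thesis unfolding resonant_space_def using subspace_vpart by (rule span_minimal)
qed

lemma conjugate_at_iff_resonant: "conjugate_at g br c t0 \<longleftrightarrow> resonant_frequencies \<noteq> {}"
proof
  assume "conjugate_at g br c t0"
  then obtain Y where Y: "Y \<in> jacobi_vanishing t0" "Y \<noteq> (\<lambda>_. 0)" unfolding conjugate_at_def by blast
  have "vector_derivative Y (at 0) \<noteq> 0"
  proof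
    assume "vector_derivative Y (at 0) = 0"
    then have "Y = (\<lambda>t. 0)" using jacobi_field_unique[of Y "\<lambda>t. 0"] jacobi_field_zero Y(1) by auto
    then show False using Y(2) by simp
  qed
  moreover have "vector_derivative Y (at 0) \<in> resonant_space"
    by (rule initial_velocity_in_resonant_space[OF Y(1)])
  ultimately show "resonant_frequencies \<noteq> {}" unfolding resonant_space_def by auto
next
  assume "resonant_frequencies \<noteq> {}"
  then obtain h where h: "h \<in> resonant_frequencies" by blast
  then obtain x where x: "x \<in> J2_eigenspace h" "x \<noteq> 0"
    unfolding resonant_frequencies_def frequencies_def J2_eigenspace_def by blast
  have "x \<in> resonant_space" unfolding resonant_space_def using h x by (auto intro: span_base)
  then obtain Y where Y: "Y \<in> jacobi_vanishing t0" "vector_derivative Y (at 0) = x"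
    using resonant_space_subset_initial_velocities by blast
  have "Y \<noteq> (\<lambda>_. 0)" using Y(2) x(2) jacobi_field_zero(2) by auto
  then show "conjugate_at g br c t0" unfolding conjugate_at_def using Y(1) t0 by blast
qed

end

lemma resonant_frequencies_eq:
  assumes "l \<in> frequencies" "n \<noteq> 0"
  shows "resonant_frequencies (2 * pi / l * of_int n)
    = {h\<in>frequencies. \<exists>m::int. m \<noteq> 0 \<and> h = of_int m * (l / of_int n)}"
proof -
  have l: "l > 0" using assms(1) frequencies_pos by blast
  have t: "2 * pi / l * of_int n \<noteq> 0" using l assms(2) by simp
  have "(\<exists>m::int. h * (2 * pi / l * of_int n) = 2 * pi * m)
      \<longleftrightarrow> (\<exists>m::int. m \<noteq> 0 \<and> h = of_int m * (l / of_int n))" if "h \<in> frequencies" for h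
  proof -
    have "m \<noteq> 0" if "h = of_int m * (l / of_int n)" for m :: int
      using frequencies_pos[OF \<open>h \<in> frequencies\<close>] that by auto
    then show ?thesis unfolding times_period_eq_iff[OF l assms(2)] by blast
  qed
  then show ?thesis unfolding resonant_frequencies_def[OF t] by (rule Collect_cong[OF conj_cong[OF refl]])
qed

theorem conjugate_at_iff:
  "conjugate_at g br c t \<longleftrightarrow> (\<exists>l\<in>frequencies. \<exists>n::int. n \<noteq> 0 \<and> t = 2 * pi / l * of_int n)"
proof (cases "t = 0")
  case True
  have "2 * pi / l * of_int n \<noteq> 0" if "l \<in> frequencies" "n \<noteq> 0" for l n
    using frequencies_pos[OF that(1)] that(2) by simp
  then show ?thesis unfolding conjugate_at_def using True by auto
next
  case False
  have "(\<exists>h\<in>frequencies. \<exists>m::int. h * t = 2 * pi * m) \<longleftrightarrow>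
      (\<exists>l\<in>frequencies. \<exists>n::int. n \<noteq> 0 \<and> t = 2 * pi / l * of_int n)"
  proof
    assume "\<exists>h\<in>frequencies. \<exists>m::int. h * t = 2 * pi * m"
    then obtain l m where l: "l \<in> frequencies" and m: "l * t = 2 * pi * of_int (m::int)" by blast
    have "l > 0" using l frequencies_pos by blast
    then have "m \<noteq> 0" using m False by auto
    moreover have "t = 2 * pi / l * of_int m" using m \<open>l > 0\<close> by (simp add: field_simps)
    ultimately show "\<exists>l\<in>frequencies. \<exists>n::int. n \<noteq> 0 \<and> t = 2 * pi / l * of_int n" using l by blast
  next
    assume "\<exists>l\<in>frequencies. \<exists>n::int. n \<noteq> 0 \<and> t = 2 * pi / l * of_int n"
    then obtain l n where l: "l \<in> frequencies" and n: "n \<noteq> 0" "t = 2 * pi / l * of_int (n::int)"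
      by blast
    have "l * t = 2 * pi * of_int n"
      unfolding n(2) times_period_eq_iff[OF frequencies_pos[OF l] n(1)] using n(1) by simp
    then show "\<exists>h\<in>frequencies. \<exists>m::int. h * t = 2 * pi * m" using l by blast
  qed
  then show ?thesis
    unfolding conjugate_at_iff_resonant[OF False] resonant_frequencies_def[OF False] by blast
qed

theorem mult_cp_eq:
  assumes "l \<in> frequencies" "n \<noteq> 0"
  shows "mult_cp g br c (2 * pi / l * of_int n)
    = (\<Sum>h\<in>{h\<in>frequencies. \<exists>m::int. m \<noteq> 0 \<and> h = of_int m * (l / of_int n)}.
        dim {x\<in>V. J z0 (J z0 x) + h\<^sup>2 *\<^sub>R x = 0})"
proof -
  define t where "t = 2 * pi / l * of_int n"
  have "t \<noteq> 0" unfolding t_def using frequencies_pos[OF assms(1)] assms(2) by simp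
  have "mult_cp g br c t = (\<Sum>h\<in>resonant_frequencies t. dim (J2_eigenspace h))"
    unfolding mult_cp_def dim_jacobi_vanishing[OF \<open>t \<noteq> 0\<close>] dim_resonant_space[OF \<open>t \<noteq> 0\<close>] ..
  also have "\<dots> = (\<Sum>h\<in>resonant_frequencies t. dim {x\<in>V. J z0 (J z0 x) + h\<^sup>2 *\<^sub>R x = 0})"
  proof (rule sum.cong[OF refl])
    fix h assume "h \<in> resonant_frequencies t"
    then have "h > 0" using frequencies_pos unfolding resonant_frequencies_def[OF \<open>t \<noteq> 0\<close>] by blast
    then show "dim (J2_eigenspace h) = dim {x\<in>V. J z0 (J z0 x) + h\<^sup>2 *\<^sub>R x = 0}"
      using vpart_J2_eigenspace_eq by simp
  qed
  finally show ?thesis unfolding t_def resonant_frequencies_eq[OF assms] .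
qed

theorem mult_cp_le_dim_vpart:
  assumes "t \<noteq> 0"
  shows "mult_cp g br c t \<le> dim V"
  unfolding mult_cp_def dim_jacobi_vanishing[OF assms]
  using resonant_space_subset_vpart[OF assms] by (rule dim_subset)

corollary sum_dim_J2_eigenspaces_le_dim_vpart:
  assumes "l \<in> frequencies" "n \<noteq> 0"
  shows "(\<Sum>h\<in>{h\<in>frequencies. \<exists>m::int. m \<noteq> 0 \<and> h = of_int m * (l / of_int n)}.
      dim {x\<in>V. J z0 (J z0 x) + h\<^sup>2 *\<^sub>R x = 0}) \<le> dim V"
  using mult_cp_eq[OF assms] mult_cp_le_dim_vpart[of "2 * pi / l * of_int n"]
    frequencies_pos[OF assms(1)] assms(2) by simp

end

theorem mainTheorem3:
  fixes br :: "'n::euclidean_space \<Rightarrow> 'n \<Rightarrow> 'n"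
    and g :: "'n \<Rightarrow> 'n \<Rightarrow> real"
    and z0 x0 :: 'n
    and c :: "real \<Rightarrow> 'n"
  assumes nil: "two_step_nilpotent br"
    and ip: "inner_prod g"
    and zndeg: "nondeg_on g (lie_center br)"
    and z0: "z0 \<in> lie_center br"
    and x0: "x0 \<in> vpart g br"
    and geo: "geodesic_velocity g br c"
    and init: "c 0 = z0 + x0"
  shows
   "((\<forall>x\<in>vpart g br. Jmap g br z0 x = 0) \<and> x0 = 0 \<longrightarrow>
        (\<forall>t. \<not> conjugate_at g br c t))
    \<and>
    ((\<forall>x\<in>vpart g br. Jmap g br z0 x = 0) \<and> x0 \<noteq> 0 \<longrightarrow>
        (\<forall>t. t \<noteq> 0 \<longrightarrow>
          (conjugate_at g br c t \<longleftrightarrow>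
             (\<exists>z\<in>lie_center br. z \<noteq> 0 \<and> br x0 (Jmap g br z x0) = (- 12 / t\<^sup>2) *\<^sub>R z))
          \<and> ((\<exists>z\<in>lie_center br. z \<noteq> 0 \<and> br x0 (Jmap g br z x0) = (- 12 / t\<^sup>2) *\<^sub>R z) \<longrightarrow>
               mult_cp g br c t =
                 dim {z\<in>lie_center br. br x0 (Jmap g br z x0) + (12 / t\<^sup>2) *\<^sub>R z = 0}
               \<and> dim {z\<in>lie_center br. br x0 (Jmap g br z x0) + (12 / t\<^sup>2) *\<^sub>R z = 0}
                   \<le> dim (lie_center br))))
    \<and>
    ((\<exists>x\<in>vpart g br. Jmap g br z0 x \<noteq> 0) \<and> x0 = 0 \<longrightarrow>
       (let \<Lambda> = {l::real. l > 0 \<and>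
                  (\<exists>x\<in>vpart g br. x \<noteq> 0 \<and> Jmap g br z0 (Jmap g br z0 x) = (- l\<^sup>2) *\<^sub>R x)}
        in (\<forall>t. conjugate_at g br c t \<longleftrightarrow>
                (\<exists>l\<in>\<Lambda>. \<exists>n::int. n \<noteq> 0 \<and> t = 2 * pi / l * of_int n))
         \<and> (\<forall>l\<in>\<Lambda>. \<forall>n::int. n \<noteq> 0 \<longrightarrow>
               mult_cp g br c (2 * pi / l * of_int n) =
                 (\<Sum>h\<in>{h\<in>\<Lambda>. \<exists>m::int. m \<noteq> 0 \<and> h = of_int m * (l / of_int n)}.
                    dim {x\<in>vpart g br. Jmap g br z0 (Jmap g br z0 x) + h\<^sup>2 *\<^sub>R x = 0})
               \<and> (\<Sum>h\<in>{h\<in>\<Lambda>. \<exists>m::int. m \<noteq> 0 \<and> h = of_int m * (l / of_int n)}.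
                    dim {x\<in>vpart g br. Jmap g br z0 (Jmap g br z0 x) + h\<^sup>2 *\<^sub>R x = 0})
                  \<le> dim (vpart g br))))"
proof -
  have setting: "nilpotent_geodesic br g z0 x0 c"
    using nil ip zndeg z0 x0 geo init
    by (simp add: nilpotent_geodesic_def nilpotent_geodesic_axioms_def metric_two_step_nilpotent_def)
  interpret nilpotent_geodesic br g z0 x0 c by (rule setting)
  have central: "central_geodesic br g z0 x0 c" if "x0 = 0"
    unfolding central_geodesic_def central_geodesic_axioms_def using setting that by blast
  have Jzero: "Jzero_geodesic br g z0 x0 c" if "\<forall>x\<in>V. J z0 x = 0"
    using setting Jmap_zero_if_zero_on_vpart[OF that]
    by (simp add: Jzero_geodesic_def Jzero_geodesic_axioms_def)
  have "dim {z\<in>Z. br x0 (J z x0) + (12 / t\<^sup>2) *\<^sub>R z = 0} \<le> dim Z" for t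
    by (rule dim_subset) blast
  then show ?thesis
    unfolding Let_def frequencies_def[symmetric]
    using Jzero_geodesic.conjugate_at_iff[OF Jzero] Jzero_geodesic.mult_cp_eq[OF Jzero]
      central_geodesic.conjugate_at_iff[OF central] central_geodesic.mult_cp_eq[OF central]
      central_geodesic.sum_dim_J2_eigenspaces_le_dim_vpart[OF central] frequencies_empty_if_J_zero
    by auto
qed

end
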